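(* Assume $(H_1)$ (for the single vector field $F_u=f+v_u$) and let $\vartheta\in\mathcal P_1(\mathbb R^n)$. Then for every map $\mathbf u:[0,T]\times\mathcal P(\mathbb R^n)\to U$ (arbitrary) the set $\mathfrak S_1(\mathbf u)$ of $\mathbf u$-sampling solutions is nonempty, and for every Borel measurable map $\mathfrak u:[0,T]\times\mathcal P(\mathbb R^n)\to\mathcal U$ the set $\mathfrak S_2(\mathfrak u)$ of $\mathfrak u$-sampling solutions is nonempty.
   Context: Setting: $T>0$, $U\subset\mathbb R^m$ compact, $\mathcal U=L_\infty([0,T];U)$, $f:\mathbb R^n\to\mathbb R^n$, $v:\mathbb R^n\times U\to\mathbb R^n$, $F_u=f+v_u$. Hypothesis $(H_1)$: $F_u(x)$ is continuous in $(x,u)$ and there is $C>0$ with $|F_u(x)|\le C(1+|x|)$ and $|F_u(x)-F_u(y)|\le C|x-y|$ for all $u\in U$, $x,y$. $\mathcal P_1(\mathbb R^n)$: probability measures with finite first moment, metrized by the 1-Wasserstein distance; $C([0,T];\mathcal P_1)$ carries the sup-metric. For $\tau\in[0,T]$, a control $u$ and $\rho\in\mathcal P_1$, $\mu[u](\tau,\rho)$ denotes the distributional solution on $[\tau,T]$ of $\partial_t\mu_t+\nabla\cdot((f+v_{u(t)})\mu_t)=0$, $\mu_\tau=\rho$ (the push-forward of $\rho$ by the flow of $\dot x=F_{u(t)}(x)$ started at time $\tau$). Partition: $\pi=\{t_k\}_{k=0}^K$ with $0=t_0<t_1<\dots<t_K=T$, $\mathrm{diam}(\pi)=\max_k(t_k-t_{k-1})$.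 $\mathbf u$-sampling polygon: set $\mu^\pi_0=\vartheta$ and recursively, for $k=1,\dots,K$, on $[t_{k-1},t_k]$ let $\mu^\pi_t=\mu[\bar w_k](t_{k-1},\mu^\pi_{t_{k-1}})_t$ with the constant control $\bar w_k\equiv\mathbf u_{t_{k-1}}[\mu^\pi_{t_{k-1}}]\in U$. $\mathfrak u$-sampling polygon: the same, but on $[t_{k-1},t_k]$ use the open-loop control $t\mapsto\mathfrak u_t[\mu^\pi_{t_{k-1}}]$ (the value at $t$ of the control $\mathfrak u[\mu^\pi_{t_{k-1}}]\in\mathcal U$ associated with time $t_{k-1}$; i.e. $\mathfrak u_{(\cdot)}$ evaluated as a short-term program). A $\mathbf u$-sampling solution (resp. $\mathfrak u$-sampling solution) is any limit in $C([0,T];\mathcal P_1)$ of a sequence of $\mathbf u$- (resp. $\mathfrak u$-) sampling polygons $\mu^{\pi_j}$ with $\mathrm{diam}(\pi_j)\to0$; $\mathfrak S_1(\mathbf u)$ and $\mathfrak S_2(\mathfrak u)$ are the sets of all such limits. *)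

theory Defs
  imports "HOL-Analysis.Analysis" "HOL-Probability.Probability"
begin

(* Space R^n is an abstract euclidean_space 'a, control values live in euclidean_space 'b (R^m).
   A vector field depending on a control value: F :: 'a => 'b => 'a, F x u = F_u(x). *)

definition P1 :: "'a::euclidean_space measure set" where
  "P1 = {\<mu>. prob_space \<mu> \<and> sets \<mu> = sets borel \<and> integrable \<mu> norm}"

definition couplings :: "'a::euclidean_space measure \<Rightarrow> 'a measure \<Rightarrow> ('a \<times> 'a) measure set" where
  "couplings \<mu> \<nu> = {\<gamma>. sets \<gamma> = sets (borel \<Otimes>\<^sub>M borel) \<and>
      distr \<gamma> borel fst = \<mu> \<and> distr \<gamma> borel snd = \<nu>}"

definition W1 :: "'a::euclidean_space measure \<Rightarrow> 'a measure \<Rightarrow> ennreal" where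
  "W1 \<mu> \<nu> = (INF \<gamma>\<in>couplings \<mu> \<nu>. \<integral>\<^sup>+ z. ennreal (dist (fst z) (snd z)) \<partial>\<gamma>)"

text \<open>Membership in C([0,T]; P_1) (only the values on [0,T] matter).\<close>
definition CP1 :: "real \<Rightarrow> (real \<Rightarrow> 'a::euclidean_space measure) set" where
  "CP1 T = {\<mu>. (\<forall>t\<in>{0..T}. \<mu> t \<in> P1) \<and>
      (\<forall>t\<in>{0..T}. ((\<lambda>s. W1 (\<mu> s) (\<mu> t)) \<longlongrightarrow> 0) (at t within {0..T}))}"

text \<open>The control set \<open>\<U> = L\<^sub>\<infinity>([0,T];U)\<close>, represented by (Lebesgue measurable) U-valued
  functions on [0,T] (values outside [0,T] are irrelevant).\<close>
definition ctrl_space :: "real \<Rightarrow> 'b::euclidean_space set \<Rightarrow> (real \<Rightarrow> 'b) set" where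
  "ctrl_space T U = {w. w \<in> borel_measurable (restrict_space lebesgue {0..T}) \<and> (\<forall>s\<in>{0..T}. w s \<in> U)}"

text \<open>Borel sigma-algebra on \<open>\<U>\<close>: generated by the maps \<open>w \<mapsto> \<integral>\<^sub>0\<^sup>t w\<close>, \<open>t \<in> [0,T]\<close>
  (this is the Borel sigma-algebra of the weak-* topology, equivalently of the L1 topology,
  on the bounded set \<open>L\<^sub>\<infinity>([0,T];U)\<close>).\<close>
definition ctrl_alg :: "real \<Rightarrow> 'b::euclidean_space set \<Rightarrow> (real \<Rightarrow> 'b) measure" where
  "ctrl_alg T U = sigma (ctrl_space T U)
     {{w \<in> ctrl_space T U. integral {0..t} w \<in> B} | t B. t \<in> {0..T} \<and> B \<in> sets borel}"

definition traj :: "('a::euclidean_space \<Rightarrow> 'b \<Rightarrow> 'a) \<Rightarrow> (real \<Rightarrow> 'b) \<Rightarrow> real \<Rightarrow> real \<Rightarrow> 'a \<Rightarrow> (real \<Rightarrow> 'a) \<Rightarrow> bool" where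
  "traj F w \<tau> t x0 \<gamma> \<longleftrightarrow> continuous_on {\<tau>..t} \<gamma> \<and>
     (\<forall>s\<in>{\<tau>..t}. (\<lambda>r. F (\<gamma> r) (w r)) integrable_on {\<tau>..s} \<and>
                   \<gamma> s = x0 + integral {\<tau>..s} (\<lambda>r. F (\<gamma> r) (w r)))"

definition flow :: "('a::euclidean_space \<Rightarrow> 'b \<Rightarrow> 'a) \<Rightarrow> (real \<Rightarrow> 'b) \<Rightarrow> real \<Rightarrow> real \<Rightarrow> 'a \<Rightarrow> 'a" where
  "flow F w \<tau> t x = (THE y. \<exists>\<gamma>. traj F w \<tau> t x \<gamma> \<and> \<gamma> t = y)"

definition mu_sol :: "('a::euclidean_space \<Rightarrow> 'b \<Rightarrow> 'a) \<Rightarrow> (real \<Rightarrow> 'b) \<Rightarrow> real \<Rightarrow> 'a measure \<Rightarrow> real \<Rightarrow> 'a measure" where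
  "mu_sol F w \<tau> \<rho> t = distr \<rho> borel (flow F w \<tau> t)"

definition is_partition :: "real \<Rightarrow> nat \<Rightarrow> (nat \<Rightarrow> real) \<Rightarrow> bool" where
  "is_partition T K p \<longleftrightarrow> 0 < K \<and> p 0 = 0 \<and> p K = T \<and> (\<forall>k<K. p k < p (Suc k))"

definition diam :: "nat \<Rightarrow> (nat \<Rightarrow> real) \<Rightarrow> real" where
  "diam K p = Max {p (Suc k) - p k | k. k < K}"

text \<open>G t \<mu> is the control used on the sampling interval starting at node time t when the
  state at that node is \<mu>.\<close>
fun node :: "('a::euclidean_space \<Rightarrow> 'b \<Rightarrow> 'a) \<Rightarrow> (real \<Rightarrow> 'a measure \<Rightarrow> (real \<Rightarrow> 'b)) \<Rightarrow>
    'a measure \<Rightarrow> (nat \<Rightarrow> real) \<Rightarrow> nat \<Rightarrow> 'a measure" where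
  "node F G \<theta> p 0 = \<theta>"
| "node F G \<theta> p (Suc k) =
     mu_sol F (G (p k) (node F G \<theta> p k)) (p k) (node F G \<theta> p k) (p (Suc k))"

definition polygon :: "('a::euclidean_space \<Rightarrow> 'b \<Rightarrow> 'a) \<Rightarrow> (real \<Rightarrow> 'a measure \<Rightarrow> (real \<Rightarrow> 'b)) \<Rightarrow>
    'a measure \<Rightarrow> nat \<Rightarrow> (nat \<Rightarrow> real) \<Rightarrow> real \<Rightarrow> 'a measure" where
  "polygon F G \<theta> K p t =
     (let k = (GREATEST k. k < K \<and> p k \<le> t) in
        mu_sol F (G (p k) (node F G \<theta> p k)) (p k) (node F G \<theta> p k) t)"

definition sampling_solutions :: "('a::euclidean_space \<Rightarrow> 'b \<Rightarrow> 'a) \<Rightarrow> (real \<Rightarrow> 'a measure \<Rightarrow> (real \<Rightarrow> 'b)) \<Rightarrow>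
    'a measure \<Rightarrow> real \<Rightarrow> (real \<Rightarrow> 'a measure) set" where
  "sampling_solutions F G \<theta> T = {\<mu>. \<mu> \<in> CP1 T \<and>
     (\<exists>K P. (\<forall>j. is_partition T (K j) (P j)) \<and> (\<lambda>j. diam (K j) (P j)) \<longlonglongrightarrow> 0 \<and>
        (\<lambda>j. \<Squnion>t\<in>{0..T}. W1 (polygon F G \<theta> (K j) (P j) t) (\<mu> t)) \<longlonglongrightarrow> 0)}"

definition S1 :: "('a::euclidean_space \<Rightarrow> 'b \<Rightarrow> 'a) \<Rightarrow> (real \<Rightarrow> 'a measure \<Rightarrow> 'b) \<Rightarrow>
    'a measure \<Rightarrow> real \<Rightarrow> (real \<Rightarrow> 'a measure) set" where
  "S1 F u \<theta> T = sampling_solutions F (\<lambda>t \<mu> s. u t \<mu>) \<theta> T"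

definition S2 :: "('a::euclidean_space \<Rightarrow> 'b \<Rightarrow> 'a) \<Rightarrow> (real \<Rightarrow> 'a measure \<Rightarrow> (real \<Rightarrow> 'b)) \<Rightarrow>
    'a measure \<Rightarrow> real \<Rightarrow> (real \<Rightarrow> 'a measure) set" where
  "S2 F uu \<theta> T = sampling_solutions F uu \<theta> T"

end

theory Submission
  imports Defs "HOL-Library.Diagonal_Subsequence"
begin

(* On each sampling interval the applied control is admissible: a constant in U, resp. a value
   of the program, which lies in the control space because uu maps into ctrl_alg. Hence the
   Caratheodory flow exists (Picard iteration), is unique, exp(C t)-Lipschitz in the initial
   point, of linear growth and Lipschitz in time, with constants that do not depend on the
   control. Every sampling polygon is therefore the push-forward of theta by a map whose
   estimates do not depend on the partition. Along uniform partitions a diagonal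
   (Arzela-Ascoli) argument yields a subsequence of these maps converging at every point,
   uniformly in time, to a limit h with the same estimates. Coupling through theta and
   dominated convergence turn this into convergence of the polygons to the curve h(t)#theta
   in sup_t W1, and the estimates on h make that curve continuous in P1. *)

section \<open>Caratheodory flows\<close>

lemma gronwall_integral:
  fixes d :: "real \<Rightarrow> real"
  assumes cont: "continuous_on {a..b} d" and L: "L \<ge> 0"
    and ineq: "\<And>s. s \<in> {a..b} \<Longrightarrow> d s \<le> A + L * integral {a..s} d"
    and s: "s \<in> {a..b}"
  shows "d s \<le> A * exp (L * (s - a))"
proof -
  define I where "I u = integral {a..u} d" for u
  define \<phi> where "\<phi> u = exp (- L * (u - a)) * (A + L * I u)" for u
  have I_cont: "continuous_on {a..b} I"
    unfolding I_def by (rule indefinite_integral_continuous_1[OF integrable_continuous_interval[OF cont]])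
  have sab: "a \<le> s" "s \<le> b" using s by auto
  have "\<phi> s \<le> \<phi> a"
  proof (rule DERIV_nonpos_imp_decreasing_open[OF sab(1)])
    fix u assume u: "a < u" "u < s"
    have "(I has_vector_derivative d u) (at u within {a..b})"
      unfolding I_def by (rule integral_has_vector_derivative[OF cont]) (use u sab in auto)
    moreover have "at u within {a..b} = at u" using u sab by (intro at_within_Icc_at) auto
    ultimately have dI: "(I has_real_derivative d u) (at u)"
      by (simp add: has_real_derivative_iff_has_vector_derivative)
    have "(\<phi> has_real_derivative L * exp (- L * (u - a)) * (d u - (A + L * I u))) (at u)"
      unfolding \<phi>_def by (auto intro!: derivative_eq_intros dI simp: algebra_simps)
    moreover have "d u - (A + L * I u) \<le> 0" using ineq[of u] u sab unfolding I_def by auto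
    ultimately show "\<exists>y. (\<phi> has_real_derivative y) (at u) \<and> y \<le> 0"
      using L by (auto intro!: mult_nonneg_nonpos)
  next
    show "continuous_on {a..s} \<phi>"
      unfolding \<phi>_def by (intro continuous_intros continuous_on_subset[OF I_cont]) (use sab in auto)
  qed
  then have "exp (- L * (s - a)) * (A + L * I s) \<le> A" unfolding \<phi>_def I_def by simp
  then have "exp (L * (s - a)) * (exp (- L * (s - a)) * (A + L * I s)) \<le> exp (L * (s - a)) * A"
    by (intro mult_left_mono) auto
  then have "A + L * I s \<le> exp (L * (s - a)) * A"
    by (simp add: mult.assoc[symmetric] exp_add[symmetric])
  then show ?thesis using ineq[OF s] unfolding I_def by (simp add: mult.commute)
qed

lemma has_integral_exp_affine:
  fixes a s L :: real
  assumes "a \<le> s" "L > 0"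
  shows "((\<lambda>r. exp (L * (r - a))) has_integral (exp (L * (s - a)) / L - 1 / L)) {a..s}"
proof -
  have "((\<lambda>r. exp (L * (r - a))) has_integral (exp (L * (s - a)) / L - exp (L * (a - a)) / L)) {a..s}"
  proof (rule fundamental_theorem_of_calculus[OF assms(1)])
    fix r assume "r \<in> {a..s}"
    have "((\<lambda>r. exp (L * (r - a)) / L) has_real_derivative (exp (L * (r - a)) * (L * (1 - 0)) / L)) (at r within {a..s})"
      using assms(2) by (intro derivative_eq_intros) auto
    then show "((\<lambda>r. exp (L * (r - a)) / L) has_vector_derivative exp (L * (r - a))) (at r within {a..s})"
      using assms by (simp add: has_real_derivative_iff_has_vector_derivative)
  qed
  then show ?thesis by simp
qed

lemma norm_integral_diff_le:
  fixes \<phi> :: "real \<Rightarrow> 'a::euclidean_space"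
  assumes int: "\<phi> integrable_on {a..s}" and s': "a \<le> s'" "s' \<le> s"
    and bound: "\<And>r. r \<in> {s'..s} \<Longrightarrow> norm (\<phi> r) \<le> \<Lambda>"
  shows "norm (integral {a..s} \<phi> - integral {a..s'} \<phi>) \<le> \<Lambda> * (s - s')"
proof -
  have "integral {a..s'} \<phi> + integral {s'..s} \<phi> = integral {a..s} \<phi>"
    using Henstock_Kurzweil_Integration.integral_combine[of a s' s \<phi>] s' int by auto
  then have "integral {a..s} \<phi> - integral {a..s'} \<phi> = integral {s'..s} \<phi>"
    by (simp add: algebra_simps)
  also have "norm \<dots> \<le> integral {s'..s} (\<lambda>r. \<Lambda>)"
    by (rule integral_norm_bound_integral)
      (use integrable_on_subinterval[OF int] s' bound in auto)
  also have "\<dots> = \<Lambda> * (s - s')" using s' by simp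
  finally show ?thesis .
qed

lemma geometric_increments_convergent:
  fixes X :: "nat \<Rightarrow> 'a::banach"
  assumes incr: "\<And>n. norm (X (Suc n) - X n) \<le> M * (1/2) ^ n"
  obtains L where "X \<longlonglongrightarrow> L" "\<And>n. norm (L - X n) \<le> 2 * M * (1/2) ^ n"
proof -
  define d where "d n = X (Suc n) - X n" for n
  have geom: "summable (\<lambda>k. M * (1/2::real) ^ (k + n))" for n
    by (intro summable_mult summable_ignore_initial_segment summable_geometric) simp
  have "summable (\<lambda>n. M * (1/2::real) ^ n)" using geom[of 0] by simp
  then have "summable (\<lambda>n. norm (d n))"
    by (rule summable_norm_comparison_test[rotated]) (use incr in \<open>auto simp: d_def\<close>)
  then have d: "summable d" by (rule summable_norm_cancel)
  have X_eq: "X n = X 0 + sum d {..<n}" for n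
    unfolding d_def by (simp add: sum_lessThan_telescope)
  have "(\<lambda>n. X 0 + sum d {..<n}) \<longlonglongrightarrow> X 0 + suminf d"
    by (intro tendsto_add tendsto_const summable_LIMSEQ d)
  then have lim: "X \<longlonglongrightarrow> X 0 + suminf d"
    by (subst (asm) X_eq[symmetric])
  have tail: "norm (X 0 + suminf d - X n) \<le> 2 * M * (1/2) ^ n" for n
  proof -
    have "X 0 + suminf d - X n = (\<Sum>k. d (k + n))"
      using suminf_split_initial_segment[OF d, of n] X_eq[of n] by simp
    also have "norm \<dots> \<le> (\<Sum>k. M * (1/2) ^ (k + n))"
      by (rule norm_suminf_le) (use incr geom in \<open>auto simp: d_def\<close>)
    also have "\<dots> = (\<Sum>k. (1/2) ^ k * (M * (1/2) ^ n))"
      by (simp add: power_add algebra_simps)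
    also have "\<dots> = (\<Sum>k. (1/2) ^ k) * (M * (1/2) ^ n)"
      by (rule suminf_mult2[symmetric]) simp
    also have "\<dots> = 2 * M * (1/2) ^ n"
      by (simp add: suminf_geometric)
    finally show ?thesis .
  qed
  show thesis by (rule that[OF lim tail])
qed

lemma traj_continuous: "traj F w a b x \<gamma> \<Longrightarrow> continuous_on {a..b} \<gamma>"
  unfolding traj_def by auto

lemma traj_integral_eq:
  "traj F w a b x \<gamma> \<Longrightarrow> s \<in> {a..b} \<Longrightarrow> \<gamma> s = x + integral {a..s} (\<lambda>r. F (\<gamma> r) (w r))"
  unfolding traj_def by auto

lemma traj_restrict: "traj F w a b x \<gamma> \<Longrightarrow> a \<le> s \<Longrightarrow> s \<le> b \<Longrightarrow> traj F w a s x \<gamma>"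
  unfolding traj_def by (auto intro: continuous_on_subset)

locale controlled_field =
  fixes F :: "'a::euclidean_space \<Rightarrow> 'b::euclidean_space \<Rightarrow> 'a" and U :: "'b set" and C :: real
  assumes continuous_field: "continuous_on (UNIV \<times> U) (\<lambda>(x, u). F x u)"
    and C_pos: "C > 0"
    and linear_growth: "\<And>u x. u \<in> U \<Longrightarrow> norm (F x u) \<le> C * (1 + norm x)"
    and lipschitz: "\<And>u x y. u \<in> U \<Longrightarrow> norm (F x u - F y u) \<le> C * norm (x - y)"
begin

definition admissible :: "(real \<Rightarrow> 'b) \<Rightarrow> real \<Rightarrow> real \<Rightarrow> bool" where
  "admissible w a b \<longleftrightarrow> w \<in> borel_measurable (lebesgue_on {a..b}) \<and> (\<forall>s\<in>{a..b}. w s \<in> U)"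

lemma admissible_subinterval: "admissible w a b \<Longrightarrow> a \<le> c \<Longrightarrow> d \<le> b \<Longrightarrow> admissible w c d"
  unfolding admissible_def by (auto intro: measurable_restrict_mono)

lemma admissibleD: "admissible w a b \<Longrightarrow> s \<in> {a..b} \<Longrightarrow> w s \<in> U"
  unfolding admissible_def by auto

lemma field_along_measurable:
  assumes w: "admissible w a b" and \<gamma>: "continuous_on {a..b} \<gamma>"
  shows "(\<lambda>r. F (\<gamma> r) (w r)) \<in> borel_measurable (lebesgue_on {a..b})"
proof -
  have "\<gamma> \<in> borel_measurable (lebesgue_on {a..b})"
    by (rule continuous_imp_measurable_on_sets_lebesgue[OF \<gamma>]) auto
  then have "(\<lambda>r. (\<gamma> r, w r)) \<in> borel_measurable (lebesgue_on {a..b})"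
    using w unfolding admissible_def by (intro borel_measurable_Pair) auto
  then have "(\<lambda>r. (\<gamma> r, w r)) \<in> measurable (lebesgue_on {a..b}) (restrict_space borel (UNIV \<times> U))"
    using w by (intro measurable_restrict_space2) (auto simp: admissible_def)
  from measurable_comp[OF this borel_measurable_continuous_on_restrict[OF continuous_field]]
  show ?thesis by (simp add: o_def)
qed

lemma field_along_integrable:
  assumes w: "admissible w a b" and \<gamma>: "continuous_on {a..b} \<gamma>"
  shows "(\<lambda>r. F (\<gamma> r) (w r)) integrable_on {a..b}"
proof (rule measurable_bounded_by_integrable_imp_integrable[OF field_along_measurable[OF w \<gamma>]])
  show "(\<lambda>r. C * (1 + norm (\<gamma> r))) integrable_on {a..b}"
    by (intro integrable_continuous_interval continuous_intros \<gamma>)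
  show "norm (F (\<gamma> r) (w r)) \<le> C * (1 + norm (\<gamma> r))" if "r \<in> {a..b}" for r
    using w that by (intro linear_growth admissibleD)
qed auto

lemma traj_growth:
  assumes w: "admissible w a b" and tr: "traj F w a b x \<gamma>" and s: "s \<in> {a..b}"
  shows "1 + norm (\<gamma> s) \<le> (1 + norm x) * exp (C * (s - a))"
proof (rule gronwall_integral[where d = "\<lambda>r. 1 + norm (\<gamma> r)", OF _ _ _ s])
  have \<gamma>: "continuous_on {a..b} \<gamma>" using tr by (rule traj_continuous)
  show "continuous_on {a..b} (\<lambda>r. 1 + norm (\<gamma> r))" by (intro continuous_intros \<gamma>)
  show "0 \<le> C" using C_pos by simp
  fix s assume s: "s \<in> {a..b}"
  have \<gamma>s: "continuous_on {a..s} \<gamma>" using \<gamma> s by (auto intro: continuous_on_subset)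
  have ws: "admissible w a s" using w s by (auto intro: admissible_subinterval)
  have "norm (integral {a..s} (\<lambda>r. F (\<gamma> r) (w r))) \<le> integral {a..s} (\<lambda>r. C * (1 + norm (\<gamma> r)))"
    by (intro integral_norm_bound_integral field_along_integrable[OF ws \<gamma>s] linear_growth
        integrable_continuous_interval continuous_intros \<gamma>s admissibleD[OF ws])
  moreover have "norm (\<gamma> s) \<le> norm x + norm (integral {a..s} (\<lambda>r. F (\<gamma> r) (w r)))"
    using traj_integral_eq[OF tr s] by (simp add: norm_triangle_ineq)
  ultimately show "1 + norm (\<gamma> s) \<le> (1 + norm x) + C * integral {a..s} (\<lambda>r. 1 + norm (\<gamma> r))"
    by simp
qed

lemma traj_dist:
  assumes w: "admissible w a b" and tr1: "traj F w a b x \<gamma>" and tr2: "traj F w a b y \<eta>"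
    and s: "s \<in> {a..b}"
  shows "norm (\<gamma> s - \<eta> s) \<le> norm (x - y) * exp (C * (s - a))"
proof (rule gronwall_integral[where d = "\<lambda>r. norm (\<gamma> r - \<eta> r)", OF _ _ _ s])
  have \<gamma>: "continuous_on {a..b} \<gamma>" using tr1 by (rule traj_continuous)
  have \<eta>: "continuous_on {a..b} \<eta>" using tr2 by (rule traj_continuous)
  show "continuous_on {a..b} (\<lambda>r. norm (\<gamma> r - \<eta> r))" by (intro continuous_intros \<gamma> \<eta>)
  show "0 \<le> C" using C_pos by simp
  fix s assume s: "s \<in> {a..b}"
  have \<gamma>s: "continuous_on {a..s} \<gamma>" and \<eta>s: "continuous_on {a..s} \<eta>"
    using \<gamma> \<eta> s by (auto intro: continuous_on_subset)
  have ws: "admissible w a s" using w s by (auto intro: admissible_subinterval)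
  note int = field_along_integrable[OF ws \<gamma>s] field_along_integrable[OF ws \<eta>s]
  have "norm (integral {a..s} (\<lambda>r. F (\<gamma> r) (w r) - F (\<eta> r) (w r)))
      \<le> integral {a..s} (\<lambda>r. C * norm (\<gamma> r - \<eta> r))"
    by (intro integral_norm_bound_integral integrable_diff int lipschitz admissibleD[OF ws]
        integrable_continuous_interval continuous_intros \<gamma>s \<eta>s)
  moreover have "\<gamma> s - \<eta> s = (x - y) + integral {a..s} (\<lambda>r. F (\<gamma> r) (w r) - F (\<eta> r) (w r))"
    using traj_integral_eq[OF tr1 s] traj_integral_eq[OF tr2 s] by (simp add: integral_diff[OF int])
  then have "norm (\<gamma> s - \<eta> s)
      \<le> norm (x - y) + norm (integral {a..s} (\<lambda>r. F (\<gamma> r) (w r) - F (\<eta> r) (w r)))"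
    by (simp add: norm_triangle_ineq)
  ultimately show "norm (\<gamma> s - \<eta> s) \<le> norm (x - y) + C * integral {a..s} (\<lambda>r. norm (\<gamma> r - \<eta> r))"
    by simp
qed

lemma traj_time_lipschitz:
  assumes w: "admissible w a b" and tr: "traj F w a b x \<gamma>"
    and s: "s \<in> {a..b}" and s': "s' \<in> {a..b}" and le: "s' \<le> s"
  shows "norm (\<gamma> s - \<gamma> s') \<le> C * (1 + norm x) * exp (C * (b - a)) * (s - s')"
proof -
  have \<gamma>s: "continuous_on {a..s} \<gamma>"
    using traj_continuous[OF tr] s by (auto intro: continuous_on_subset)
  have ws: "admissible w a s" using w s by (auto intro: admissible_subinterval)
  have "norm (integral {a..s} (\<lambda>r. F (\<gamma> r) (w r)) - integral {a..s'} (\<lambda>r. F (\<gamma> r) (w r)))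
      \<le> C * (1 + norm x) * exp (C * (b - a)) * (s - s')"
  proof (rule norm_integral_diff_le[OF field_along_integrable[OF ws \<gamma>s]])
    fix r assume r: "r \<in> {s'..s}"
    then have ra: "r \<in> {a..b}" using s s' by auto
    have "norm (F (\<gamma> r) (w r)) \<le> C * (1 + norm (\<gamma> r))"
      using w ra by (intro linear_growth admissibleD)
    also have "\<dots> \<le> C * ((1 + norm x) * exp (C * (b - a)))"
    proof -
      have "(1 + norm x) * exp (C * (r - a)) \<le> (1 + norm x) * exp (C * (b - a))"
        using ra C_pos by (intro mult_left_mono) auto
      with traj_growth[OF w tr ra] have "1 + norm (\<gamma> r) \<le> (1 + norm x) * exp (C * (b - a))"
        by linarith
      then show ?thesis using C_pos by (intro mult_left_mono) auto
    qed
    finally show "norm (F (\<gamma> r) (w r)) \<le> C * (1 + norm x) * exp (C * (b - a))"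
      by (simp add: mult.assoc)
  qed (use s' le in auto)
  then show ?thesis
    using traj_integral_eq[OF tr s] traj_integral_eq[OF tr s'] by simp
qed

primrec picard :: "(real \<Rightarrow> 'b) \<Rightarrow> real \<Rightarrow> 'a \<Rightarrow> nat \<Rightarrow> real \<Rightarrow> 'a" where
  "picard w a x 0 = (\<lambda>s. x)"
| "picard w a x (Suc n) = (\<lambda>s. x + integral {a..s} (\<lambda>r. F (picard w a x n r) (w r)))"

lemma picard_continuous:
  assumes w: "admissible w a b"
  shows "continuous_on {a..b} (picard w a x n)"
proof (induction n)
  case (Suc n)
  then show ?case
    by (auto intro!: continuous_on_add indefinite_integral_continuous_1 field_along_integrable[OF w])
qed simp

lemma picard_integrable:
  assumes w: "admissible w a b" and s: "s \<in> {a..b}"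
  shows "(\<lambda>r. F (picard w a x n r) (w r)) integrable_on {a..s}"
  using s by (intro field_along_integrable[OF admissible_subinterval[OF w]]
      continuous_on_subset[OF picard_continuous[OF w]]) auto

text \<open>The weight \<open>exp (2 C (s - a))\<close> turns the Picard map into a contraction with factor \<open>1/2\<close>.\<close>

lemma picard_increment_bound:
  assumes w: "admissible w a b" and s: "s \<in> {a..b}"
  shows "norm (picard w a x (Suc n) s - picard w a x n s)
    \<le> C * (1 + norm x) * (b - a) * exp (2 * C * (s - a)) * (1/2) ^ n"
  using s
proof (induction n arbitrary: s)
  case 0
  have "norm (integral {a..s} (\<lambda>r. F x (w r)) - integral {a..a} (\<lambda>r. F x (w r)))
      \<le> C * (1 + norm x) * (s - a)"
    using 0 by (intro norm_integral_diff_le picard_integrable[OF w, of s x 0, simplified]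
        linear_growth admissibleD[OF w]) auto
  also have "\<dots> \<le> C * (1 + norm x) * (b - a)"
    using 0 C_pos by (intro mult_left_mono) auto
  also have "\<dots> \<le> C * (1 + norm x) * (b - a) * exp (2 * C * (s - a))"
    using mult_left_mono[of 1 "exp (2 * C * (s - a))" "C * (1 + norm x) * (b - a)"] 0 C_pos
    by auto
  finally show ?case by simp
next
  case (Suc n)
  define K where "K = C * (1 + norm x) * (b - a)"
  let ?p = "picard w a x"
  have hi: "((\<lambda>r. (C * K * (1/2)^n) * exp (2 * C * (r - a))) has_integral
      ((C * K * (1/2)^n) * (exp (2 * C * (s - a)) / (2 * C) - 1 / (2 * C)))) {a..s}"
    by (intro has_integral_mult_right has_integral_exp_affine) (use Suc.prems C_pos in auto)
  note int = picard_integrable[OF w Suc.prems, of x "Suc n"] picard_integrable[OF w Suc.prems, of x n]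
  have "?p (Suc (Suc n)) s - ?p (Suc n) s
      = integral {a..s} (\<lambda>r. F (?p (Suc n) r) (w r)) - integral {a..s} (\<lambda>r. F (?p n r) (w r))"
    by (simp only: picard.simps(2)[of w a x "Suc n"] picard.simps(2)[of w a x n]) simp
  then have "norm (?p (Suc (Suc n)) s - ?p (Suc n) s)
      = norm (integral {a..s} (\<lambda>r. F (?p (Suc n) r) (w r) - F (?p n r) (w r)))"
    by (simp only: integral_diff[OF int])
  also have "\<dots> \<le> integral {a..s} (\<lambda>r. (C * K * (1/2)^n) * exp (2 * C * (r - a)))"
  proof (rule integral_norm_bound_integral)
    fix r assume r: "r \<in> {a..s}"
    then have rab: "r \<in> {a..b}" using Suc.prems by auto
    have "norm (F (?p (Suc n) r) (w r) - F (?p n r) (w r)) \<le> C * norm (?p (Suc n) r - ?p n r)"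
      by (rule lipschitz[OF admissibleD[OF w rab]])
    also have "\<dots> \<le> C * (K * exp (2 * C * (r - a)) * (1/2) ^ n)"
      using Suc.IH[OF rab] C_pos unfolding K_def by (intro mult_left_mono) auto
    finally show "norm (F (?p (Suc n) r) (w r) - F (?p n r) (w r))
        \<le> (C * K * (1/2)^n) * exp (2 * C * (r - a))"
      by (simp add: algebra_simps)
  qed (use hi integrable_diff[OF int] in auto)
  also have "\<dots> = K * (1/2)^n * (exp (2 * C * (s - a)) - 1) / 2"
    unfolding integral_unique[OF hi] using C_pos by (simp add: field_simps)
  also have "\<dots> \<le> K * exp (2 * C * (s - a)) * (1/2) ^ Suc n"
    using C_pos Suc.prems unfolding K_def by (simp add: divide_right_mono mult_left_mono)
  finally show ?case unfolding K_def .
qed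

lemma traj_exists:
  assumes w: "admissible w a b"
  shows "\<exists>\<gamma>. traj F w a b x \<gamma>"
proof -
  let ?p = "picard w a x"
  define M where "M = C * (1 + norm x) * (b - a) * exp (2 * C * (b - a))"
  have "norm (?p (Suc n) s - ?p n s) \<le> M * (1/2) ^ n" if s: "s \<in> {a..b}" for n s
  proof -
    have "exp (2 * C * (s - a)) \<le> exp (2 * C * (b - a))" using s C_pos by simp
    moreover have "C * (1 + norm x) * (b - a) \<ge> 0" using s C_pos by auto
    ultimately have "C * (1 + norm x) * (b - a) * exp (2 * C * (s - a)) \<le> M"
      unfolding M_def by (rule mult_left_mono)
    then show ?thesis
      by (rule order_trans[OF picard_increment_bound[OF w s] mult_right_mono]) simp
  qed
  then have "\<exists>L. (\<lambda>n. ?p n s) \<longlonglongrightarrow> L \<and> (\<forall>n. norm (L - ?p n s) \<le> 2 * M * (1/2) ^ n)"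
    if "s \<in> {a..b}" for s
    using geometric_increments_convergent[where X = "\<lambda>n. ?p n s"] that by metis
  then obtain \<gamma> where lim: "\<And>s. s \<in> {a..b} \<Longrightarrow> (\<lambda>n. ?p n s) \<longlonglongrightarrow> \<gamma> s"
    and tail: "\<And>s n. s \<in> {a..b} \<Longrightarrow> norm (\<gamma> s - ?p n s) \<le> 2 * M * (1/2) ^ n"
    by metis
  have tail_lim: "(\<lambda>n. 2 * M * (1/2::real) ^ n) \<longlonglongrightarrow> 0"
    by (intro tendsto_mult_right_zero LIMSEQ_realpow_zero) auto
  have "uniform_limit {a..b} ?p \<gamma> sequentially"
  proof (rule uniform_limitI)
    fix e :: real assume "e > 0"
    with tail_lim have "\<forall>\<^sub>F n in sequentially. 2 * M * (1/2) ^ n < e"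
      by (auto dest: order_tendstoD(2))
    then show "\<forall>\<^sub>F n in sequentially. \<forall>s\<in>{a..b}. dist (?p n s) (\<gamma> s) < e"
    proof eventually_elim
      case (elim n)
      show ?case
      proof
        fix s assume "s \<in> {a..b}"
        from order.strict_trans1[OF tail[OF this] elim] show "dist (?p n s) (\<gamma> s) < e"
          by (simp add: dist_norm norm_minus_commute)
      qed
    qed
  qed
  then have \<gamma>: "continuous_on {a..b} \<gamma>"
    by (rule uniform_limit_theorem[rotated]) (auto intro!: always_eventually picard_continuous[OF w])
  have "traj F w a b x \<gamma>"
    unfolding traj_def
  proof (intro conjI ballI \<gamma>)
    fix s assume s: "s \<in> {a..b}"
    have ws: "admissible w a s" using w s by (auto intro: admissible_subinterval)
    have int: "(\<lambda>r. F (\<gamma> r) (w r)) integrable_on {a..s}"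
      using \<gamma> s by (intro field_along_integrable[OF ws]) (auto intro: continuous_on_subset)
    then show "(\<lambda>r. F (\<gamma> r) (w r)) integrable_on {a..s}" .
    have bound: "norm (?p (Suc n) s - (x + integral {a..s} (\<lambda>r. F (\<gamma> r) (w r))))
        \<le> (s - a) * (C * (2 * M * (1/2) ^ n))" for n
    proof -
      have "norm (?p (Suc n) s - (x + integral {a..s} (\<lambda>r. F (\<gamma> r) (w r))))
          = norm (integral {a..s} (\<lambda>r. F (?p n r) (w r) - F (\<gamma> r) (w r)))"
        by (simp add: integral_diff[OF picard_integrable[OF w s] int])
      also have "\<dots> \<le> integral {a..s} (\<lambda>r. C * (2 * M * (1/2) ^ n))"
      proof (rule integral_norm_bound_integral)
        fix r assume "r \<in> {a..s}"
        then have r: "r \<in> {a..b}" using s by auto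
        have "norm (F (?p n r) (w r) - F (\<gamma> r) (w r)) \<le> C * norm (\<gamma> r - ?p n r)"
          using lipschitz[OF admissibleD[OF w r]] by (simp add: norm_minus_commute)
        also have "\<dots> \<le> C * (2 * M * (1/2) ^ n)"
          using tail[OF r, of n] C_pos by (intro mult_left_mono) auto
        finally show "norm (F (?p n r) (w r) - F (\<gamma> r) (w r)) \<le> C * (2 * M * (1/2) ^ n)" .
      qed (auto intro: integrable_diff picard_integrable[OF w s] int)
      also have "\<dots> = (s - a) * (C * (2 * M * (1/2) ^ n))" using s by simp
      finally show ?thesis .
    qed
    have "(\<lambda>n. ?p (Suc n) s - (x + integral {a..s} (\<lambda>r. F (\<gamma> r) (w r)))) \<longlonglongrightarrow> 0"
      by (rule Lim_null_comparison[OF always_eventually[OF allI[OF bound]]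
            tendsto_mult_right_zero[OF tendsto_mult_right_zero[OF tail_lim]]])
    then have "(\<lambda>n. ?p (Suc n) s) \<longlonglongrightarrow> x + integral {a..s} (\<lambda>r. F (\<gamma> r) (w r))"
      by (rule LIM_zero_cancel)
    with LIMSEQ_Suc[OF lim[OF s]] show "\<gamma> s = x + integral {a..s} (\<lambda>r. F (\<gamma> r) (w r))"
      by (rule LIMSEQ_unique)
  qed
  then show ?thesis by blast
qed

lemma flow_eq_traj:
  assumes w: "admissible w a b" and tr: "traj F w a b x \<gamma>" and s: "s \<in> {a..b}"
  shows "flow F w a s x = \<gamma> s"
  unfolding flow_def
proof (rule the_equality)
  show "\<exists>\<gamma>'. traj F w a s x \<gamma>' \<and> \<gamma>' s = \<gamma> s"
    using traj_restrict[OF tr] s by auto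
  fix y assume "\<exists>\<gamma>'. traj F w a s x \<gamma>' \<and> \<gamma>' s = y"
  then obtain \<gamma>' where tr': "traj F w a s x \<gamma>'" and y: "\<gamma>' s = y" by auto
  have "admissible w a s" using w s by (auto intro: admissible_subinterval)
  from traj_dist[OF this tr' traj_restrict[OF tr]] s y show "y = \<gamma> s" by auto
qed

lemma obtain_flow_traj:
  assumes w: "admissible w a b"
  obtains \<gamma> where "traj F w a b x \<gamma>" "\<And>s. s \<in> {a..b} \<Longrightarrow> flow F w a s x = \<gamma> s"
  using traj_exists[OF w] flow_eq_traj[OF w] by blast

lemma flow_start:
  assumes w: "admissible w a b" and ab: "a \<le> b"
  shows "flow F w a a x = x"
proof -
  obtain \<gamma> where tr: "traj F w a b x \<gamma>" and fl: "\<And>s. s \<in> {a..b} \<Longrightarrow> flow F w a s x = \<gamma> s"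
    using obtain_flow_traj[OF w] by blast
  show ?thesis using traj_integral_eq[OF tr, of a] fl[of a] ab by simp
qed

lemma flow_dist:
  assumes w: "admissible w a b" and s: "s \<in> {a..b}"
  shows "dist (flow F w a s x) (flow F w a s y) \<le> exp (C * (s - a)) * dist x y"
proof -
  obtain \<gamma> where tr: "traj F w a b x \<gamma>" and fl: "\<And>s. s \<in> {a..b} \<Longrightarrow> flow F w a s x = \<gamma> s"
    using obtain_flow_traj[OF w] by blast
  obtain \<eta> where tr2: "traj F w a b y \<eta>" and fl2: "\<And>s. s \<in> {a..b} \<Longrightarrow> flow F w a s y = \<eta> s"
    using obtain_flow_traj[OF w] by blast
  show ?thesis using traj_dist[OF w tr tr2 s] fl[OF s] fl2[OF s] by (simp add: dist_norm mult.commute)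
qed

lemma flow_growth:
  assumes w: "admissible w a b" and s: "s \<in> {a..b}"
  shows "1 + norm (flow F w a s x) \<le> (1 + norm x) * exp (C * (s - a))"
proof -
  obtain \<gamma> where tr: "traj F w a b x \<gamma>" and fl: "\<And>s. s \<in> {a..b} \<Longrightarrow> flow F w a s x = \<gamma> s"
    using obtain_flow_traj[OF w] by blast
  show ?thesis using traj_growth[OF w tr s] fl[OF s] by simp
qed

lemma flow_time_lipschitz:
  assumes w: "admissible w a b" and s: "s \<in> {a..b}" and s': "s' \<in> {a..b}"
  shows "dist (flow F w a s x) (flow F w a s' x) \<le> C * (1 + norm x) * exp (C * (b - a)) * \<bar>s - s'\<bar>"
proof -
  obtain \<gamma> where tr: "traj F w a b x \<gamma>" and fl: "\<And>s. s \<in> {a..b} \<Longrightarrow> flow F w a s x = \<gamma> s"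
    using obtain_flow_traj[OF w] by blast
  show ?thesis
    using traj_time_lipschitz[OF w tr s s'] traj_time_lipschitz[OF w tr s' s] fl[OF s] fl[OF s']
    by (cases "s' \<le> s") (auto simp: dist_norm norm_minus_commute)
qed

end

section \<open>Subsequences of equi-Lipschitz families\<close>

lemma bounded_pointwise_diagonal_subseq:
  fixes g :: "nat \<Rightarrow> 'c \<Rightarrow> 'a::euclidean_space" and d :: "nat \<Rightarrow> 'c"
  assumes bounded: "\<And>n. bounded (range (\<lambda>j. g j (d n)))"
  obtains \<rho> where "strict_mono \<rho>" "\<And>n. convergent (\<lambda>j. g (\<rho> j) (d n))"
proof -
  let ?P = "\<lambda>n s. convergent (\<lambda>k. g (s k) (d n))"
  interpret subseqs ?P
  proof (unfold convergent_def, unfold subseqs_def, auto)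
    fix n :: nat and s :: "nat \<Rightarrow> nat" assume "strict_mono s"
    have "range (\<lambda>k. g (s k) (d n)) \<subseteq> range (\<lambda>j. g j (d n))" by blast
    then have "bounded (range (\<lambda>k. g (s k) (d n)))"
      by (rule bounded_subset[OF bounded])
    then obtain l r where "strict_mono r" "((\<lambda>k. g (s k) (d n)) \<circ> r) \<longlonglongrightarrow> l"
      using bounded_imp_convergent_subsequence by blast
    then show "\<exists>s'. strict_mono (s'::nat\<Rightarrow>nat) \<and> (\<exists>l. (\<lambda>k. g (s (s' k)) (d n)) \<longlonglongrightarrow> l)"
      by (auto simp: comp_def)
  qed
  have "?P n diagseq" for n
  proof -
    have "convergent ((\<lambda>k. g (seqseq (Suc n) k) (d n)) \<circ> (\<lambda>k. fold_reduce (Suc n) k (Suc n + k)))"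
      by (rule convergent_subseq_convergent[OF seqseq_holds subseq_diagonal_rest])
    then have "?P n (diagseq \<circ> (+) (Suc n))"
      unfolding diagseq_seqseq by (simp only: comp_def)
    then have "convergent (\<lambda>k. g (diagseq (k + Suc n)) (d n))"
      by (simp only: comp_def add.commute[of "Suc n"])
    then show ?thesis
      unfolding convergent_def by (blast intro: LIMSEQ_offset)
  qed
  with subseq_diagseq show thesis by (rule that)
qed

lemma equilipschitz_convergent_from_dense:
  fixes g :: "nat \<Rightarrow> 'c::metric_space \<Rightarrow> 'a::{metric_space, complete_space}"
  assumes dense: "\<And>e. e > 0 \<Longrightarrow> \<exists>n. dist (d n) z < e"
    and conv: "\<And>n. convergent (\<lambda>j. g j (d n))"
    and lip: "\<And>j z'. dist (g j z') (g j z) \<le> Q * dist z' z" and Q: "Q \<ge> 0"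
  shows "convergent (\<lambda>j. g j z)"
proof -
  have "Cauchy (\<lambda>j. g j z)"
  proof (rule metric_CauchyI)
    fix e :: real assume e: "e > 0"
    define \<eta> where "\<eta> = e / (3 * (Q + 1))"
    have "\<eta> > 0" unfolding \<eta>_def using e Q by auto
    then obtain n where n: "dist (d n) z < \<eta>" using dense by blast
    have "Q * \<eta> < e / 3"
      using e Q unfolding \<eta>_def by (simp add: field_simps)
    then have close: "dist (g j (d n)) (g j z) < e / 3" for j
      using lip[of j "d n"] mult_left_mono[OF less_imp_le[OF n] Q] by linarith
    obtain N where N: "\<And>m k. m \<ge> N \<Longrightarrow> k \<ge> N \<Longrightarrow> dist (g m (d n)) (g k (d n)) < e / 3"
      using metric_CauchyD[OF convergent_Cauchy[OF conv[of n]], of "e / 3"] e by auto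
    have "dist (g m z) (g k z) < e" if "m \<ge> N" "k \<ge> N" for m k
    proof -
      have "dist (g m z) (g m (d n)) < e / 3" using close[of m] by (simp add: dist_commute)
      from dist_triangle_third[OF this N[OF that] close[of k]] show ?thesis .
    qed
    then show "\<exists>N. \<forall>m\<ge>N. \<forall>k\<ge>N. dist (g m z) (g k z) < e" by blast
  qed
  then show ?thesis by (simp add: Cauchy_convergent_iff)
qed

lemma equilipschitz_pointwise_convergent_subseq:
  fixes g :: "nat \<Rightarrow> 'c::{metric_space, second_countable_topology} \<Rightarrow> 'a::euclidean_space"
  assumes bounded: "\<And>j z. norm (g j z) \<le> B z"
    and lip: "\<And>j z z'. dist (g j z') (g j z) \<le> Q z * dist z' z" and Q: "\<And>z. Q z \<ge> 0"
  obtains \<rho> where "strict_mono \<rho>" "\<And>z. convergent (\<lambda>j. g (\<rho> j) z)"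
proof -
  obtain D :: "'c set" where D: "countable D"
    and D_dense: "\<And>X. open X \<Longrightarrow> X \<noteq> {} \<Longrightarrow> \<exists>d\<in>D. d \<in> X"
    using countable_dense_exists by blast
  have "D \<noteq> {}" using D_dense[of UNIV] by auto
  with D have range_D: "range (from_nat_into D) = D" by simp
  have dense: "\<exists>n. dist (from_nat_into D n) z < e" if e: "e > 0" for z e
  proof -
    obtain d where "d \<in> D" "dist z d < e" using D_dense[OF open_ball, of z e] e by auto
    moreover obtain n where "d = from_nat_into D n" using \<open>d \<in> D\<close> range_D by blast
    ultimately show ?thesis by (auto simp: dist_commute)
  qed
  have bounded_D: "bounded (range (\<lambda>j. g j (from_nat_into D n)))" for n
    unfolding bounded_iff using bounded by blast
  obtain \<rho> where \<rho>: "strict_mono \<rho>" and conv: "\<And>n. convergent (\<lambda>j. g (\<rho> j) (from_nat_into D n))"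
    using bounded_pointwise_diagonal_subseq[of g "from_nat_into D", OF bounded_D] by blast
  show thesis
    by (rule that[OF \<rho> equilipschitz_convergent_from_dense[OF dense conv lip Q]])
qed

lemma equilipschitz_pointwise_imp_uniform_limit:
  fixes \<phi> :: "nat \<Rightarrow> 'c::metric_space \<Rightarrow> 'a::metric_space"
  assumes S: "compact S" and K: "K \<ge> 0"
    and lip: "\<And>j s t. s \<in> S \<Longrightarrow> t \<in> S \<Longrightarrow> dist (\<phi> j s) (\<phi> j t) \<le> K * dist s t"
    and lim: "\<And>t. t \<in> S \<Longrightarrow> (\<lambda>j. \<phi> j t) \<longlonglongrightarrow> \<psi> t"
  shows "uniform_limit S \<phi> \<psi> sequentially"
proof (rule uniform_limitI)
  fix e :: real assume e: "e > 0"
  have \<psi>_lip: "dist (\<psi> s) (\<psi> t) \<le> K * dist s t" if "s \<in> S" "t \<in> S" for s t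
    by (rule LIMSEQ_le_const2[OF tendsto_dist[OF lim lim]]) (use lip that in auto)
  define \<delta> where "\<delta> = e / (3 * (K + 1))"
  have \<delta>: "\<delta> > 0" unfolding \<delta>_def using e K by auto
  have K\<delta>: "K * \<delta> < e / 3" unfolding \<delta>_def using e K by (simp add: field_simps)
  obtain S' where S': "S' \<subseteq> S" "finite S'" "S \<subseteq> (\<Union>t\<in>S'. ball t \<delta>)"
    using compactE_image[OF S, where C = S and f = "\<lambda>t. ball t \<delta>"] \<delta> by force
  have "\<forall>\<^sub>F j in sequentially. \<forall>t'\<in>S'. dist (\<phi> j t') (\<psi> t') < e / 3"
    using S' e by (intro eventually_ball_finite ballI tendstoD[OF lim]) auto
  then show "\<forall>\<^sub>F j in sequentially. \<forall>t\<in>S. dist (\<phi> j t) (\<psi> t) < e"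
  proof eventually_elim
    case (elim j)
    show ?case
    proof
      fix t assume t: "t \<in> S"
      then obtain t' where t': "t' \<in> S'" "dist t' t < \<delta>" using S'(3) by auto
      have "K * dist t t' \<le> K * \<delta>" "K * dist t' t \<le> K * \<delta>"
        using t' K by (auto simp: dist_commute intro: mult_left_mono)
      then have "dist (\<phi> j t) (\<phi> j t') < e / 3" "dist (\<psi> t') (\<psi> t) < e / 3"
        using lip[of t t' j] \<psi>_lip[of t' t] t t' S'(1) K\<delta> by auto
      moreover have "dist (\<phi> j t') (\<psi> t') < e / 3" using elim t' by blast
      ultimately show "dist (\<phi> j t) (\<psi> t) < e" by (metis dist_triangle_third)
    qed
  qed
qed

text \<open>Time is clamped to \<open>[0, T]\<close> so that the family lives on the separable space
  \<open>\<real> \<times> 'a\<close> with the same estimates.\<close>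

lemma equilipschitz_subseq_uniform_in_time:
  fixes g :: "nat \<Rightarrow> real \<Rightarrow> 'a::euclidean_space \<Rightarrow> 'a"
  assumes L: "L \<ge> 0" and M: "M \<ge> 0"
    and lip: "\<And>j t x y. t \<in> {0..T} \<Longrightarrow> dist (g j t x) (g j t y) \<le> L * dist x y"
    and growth: "\<And>j t x. t \<in> {0..T} \<Longrightarrow> norm (g j t x) \<le> E * (1 + norm x)"
    and time: "\<And>j t s x. t \<in> {0..T} \<Longrightarrow> s \<in> {0..T} \<Longrightarrow>
      dist (g j t x) (g j s x) \<le> M * (1 + norm x) * \<bar>t - s\<bar>"
  shows "\<exists>\<rho> h. strict_mono \<rho> \<and> (\<forall>t\<in>{0..T}. \<forall>x. (\<lambda>j. g (\<rho> j) t x) \<longlonglongrightarrow> h t x) \<and>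
    (\<forall>x. uniform_limit {0..T} (\<lambda>j t. g (\<rho> j) t x) (\<lambda>t. h t x) sequentially)"
proof (cases "T \<ge> 0")
  case T: True
  define c where "c t = max 0 (min T t)" for t :: real
  have c: "c t \<in> {0..T}" "\<bar>c t - c s\<bar> \<le> dist (t, x) (s, y)" for t s :: real and x y :: 'a
    unfolding c_def using T dist_fst_le[of "(t, x)" "(s, y)"] by (auto simp: dist_real_def)
  define g' where "g' j z = g j (c (fst z)) (snd z)" for j and z :: "real \<times> 'a"
  have lip': "dist (g' j z') (g' j z) \<le> (L + M * (1 + norm (snd z))) * dist z' z" for j z z'
  proof -
    have "dist (g' j z') (g' j z) \<le> dist (g j (c (fst z')) (snd z')) (g j (c (fst z')) (snd z))
        + dist (g j (c (fst z')) (snd z)) (g j (c (fst z)) (snd z))"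
      unfolding g'_def by (rule dist_triangle)
    also have "\<dots> \<le> L * dist (snd z') (snd z) + M * (1 + norm (snd z)) * \<bar>c (fst z') - c (fst z)\<bar>"
      by (intro add_mono lip time c(1))
    also have "\<dots> \<le> L * dist z' z + M * (1 + norm (snd z)) * dist z' z"
      using dist_snd_le[of z' z] c(2)[of "fst z'" "fst z" "snd z'" "snd z"] L M
      by (intro add_mono mult_left_mono) auto
    finally show ?thesis by (simp add: algebra_simps)
  qed
  obtain \<rho> where \<rho>: "strict_mono \<rho>" and conv: "\<And>z. convergent (\<lambda>j. g' (\<rho> j) z)"
    using equilipschitz_pointwise_convergent_subseq[of g' "\<lambda>z. E * (1 + norm (snd z))", OF _ lip']
      growth[OF c(1)] L M unfolding g'_def by auto
  define h where "h t x = lim (\<lambda>j. g' (\<rho> j) (t, x))" for t x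
  have lim: "(\<lambda>j. g (\<rho> j) t x) \<longlonglongrightarrow> h t x" if "t \<in> {0..T}" for t x
    using conv[of "(t, x)"] that unfolding h_def g'_def c_def
    by (auto simp: convergent_LIMSEQ_iff)
  have "uniform_limit {0..T} (\<lambda>j t. g (\<rho> j) t x) (\<lambda>t. h t x) sequentially" for x
    using M time lim
    by (intro equilipschitz_pointwise_imp_uniform_limit[where K = "M * (1 + norm x)"])
      (auto simp: dist_real_def)
  with \<rho> lim show ?thesis by blast
next
  case False
  then show ?thesis by (intro exI[of _ id]) (auto simp: strict_mono_def uniform_limit_iff)
qed

section \<open>Push-forwards in the Wasserstein space\<close>

lemma lipschitz_borel_measurable:
  fixes f :: "'a::euclidean_space \<Rightarrow> 'c::euclidean_space"
  assumes "\<And>x y. dist (f x) (f y) \<le> L * dist x y" and "L \<ge> 0"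
  shows "f \<in> borel_measurable borel"
  using assms by (intro borel_measurable_continuous_onI lipschitz_on_continuous_on lipschitz_onI)

lemma P1D:
  assumes "\<theta> \<in> P1"
  shows "prob_space \<theta>" "sets \<theta> = sets borel" "integrable \<theta> norm"
  using assms unfolding P1_def by auto

lemma P1_integrable_affine_norm:
  fixes \<theta> :: "'a::euclidean_space measure"
  assumes "\<theta> \<in> P1"
  shows "integrable \<theta> (\<lambda>x. a * (1 + norm x))"
proof -
  interpret prob_space \<theta> using P1D[OF assms] by simp
  show ?thesis using P1D(3)[OF assms] by (intro integrable_mult_right Bochner_Integration.integrable_add) auto
qed

lemma distr_in_prob_algebra:
  assumes "\<theta> \<in> P1" and "h \<in> borel_measurable borel"
  shows "distr \<theta> borel h \<in> space (prob_algebra borel)"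
proof -
  interpret prob_space \<theta> using P1D[OF assms(1)] by simp
  have "h \<in> measurable \<theta> borel" using assms(2) by (simp add: measurable_cong_sets[OF P1D(2)[OF assms(1)] refl])
  then show ?thesis unfolding space_prob_algebra by (auto intro: prob_space_distr)
qed

lemma distr_in_P1:
  fixes \<theta> :: "'a::euclidean_space measure"
  assumes \<theta>: "\<theta> \<in> P1" and h: "h \<in> borel_measurable borel"
    and growth: "\<And>x. norm (h x) \<le> E * (1 + norm x)"
  shows "distr \<theta> borel h \<in> P1"
proof -
  interpret prob_space \<theta> using P1D[OF \<theta>] by simp
  have h': "h \<in> measurable \<theta> borel" using h by (simp add: measurable_cong_sets[OF P1D(2)[OF \<theta>] refl])
  have "integrable \<theta> (\<lambda>x. norm (h x))"
    using h' growth
    by (intro Bochner_Integration.integrable_bound[OF P1_integrable_affine_norm[OF \<theta>, of E]] AE_I2)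
      (auto intro: order_trans abs_ge_self)
  then show ?thesis
    using prob_space_distr[OF h'] h' unfolding P1_def by (simp add: integrable_distr_eq)
qed

lemma W1_distr_le:
  fixes \<theta> :: "'a::euclidean_space measure"
  assumes s: "sets \<theta> = sets borel" and g: "g \<in> borel_measurable borel" and h: "h \<in> borel_measurable borel"
  shows "W1 (distr \<theta> borel g) (distr \<theta> borel h) \<le> (\<integral>\<^sup>+ x. ennreal (dist (g x) (h x)) \<partial>\<theta>)"
proof -
  have gh: "(\<lambda>x. (g x, h x)) \<in> measurable \<theta> (borel \<Otimes>\<^sub>M borel)"
    using g h by (simp add: measurable_cong_sets[OF s refl])
  define \<gamma> where "\<gamma> = distr \<theta> (borel \<Otimes>\<^sub>M borel) (\<lambda>x. (g x, h x))"
  have "\<gamma> \<in> couplings (distr \<theta> borel g) (distr \<theta> borel h)"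
    unfolding couplings_def \<gamma>_def
    using distr_distr[OF measurable_fst gh] distr_distr[OF measurable_snd gh] by (simp add: comp_def)
  then have "W1 (distr \<theta> borel g) (distr \<theta> borel h) \<le> (\<integral>\<^sup>+ z. ennreal (dist (fst z) (snd z)) \<partial>\<gamma>)"
    unfolding W1_def by (rule INF_lower)
  also have "\<dots> = (\<integral>\<^sup>+ x. ennreal (dist (g x) (h x)) \<partial>\<theta>)"
    unfolding \<gamma>_def by (subst nn_integral_distr[OF gh]) (auto intro!: borel_measurable_dist measurable_fst'' measurable_snd'')
  finally show ?thesis .
qed

text \<open>Coupling \<open>\<mu>\<^sub>s\<close> and \<open>\<mu>\<^sub>t\<close> through \<open>\<theta>\<close> bounds their distance by the
  \<open>\<theta>\<close>-average of \<open>|h s x - h t x|\<close>.\<close>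

lemma distr_curve_in_CP1:
  fixes \<theta> :: "'a::euclidean_space measure"
  assumes \<theta>: "\<theta> \<in> P1" and meas: "\<And>t. t \<in> {0..T} \<Longrightarrow> h t \<in> borel_measurable borel"
    and growth: "\<And>t x. t \<in> {0..T} \<Longrightarrow> norm (h t x) \<le> E * (1 + norm x)"
    and time: "\<And>t s x. t \<in> {0..T} \<Longrightarrow> s \<in> {0..T} \<Longrightarrow> dist (h t x) (h s x) \<le> M * (1 + norm x) * \<bar>t - s\<bar>"
    and M: "M \<ge> 0"
  shows "(\<lambda>t. distr \<theta> borel (h t)) \<in> CP1 T"
  unfolding CP1_def
proof (intro CollectI conjI ballI)
  fix t assume t: "t \<in> {0..T}"
  show "distr \<theta> borel (h t) \<in> P1" by (rule distr_in_P1[OF \<theta> meas[OF t] growth[OF t]])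
  define J where "J = integral\<^sup>L \<theta> (\<lambda>x. 1 + norm x)"
  have bound: "W1 (distr \<theta> borel (h s)) (distr \<theta> borel (h t)) \<le> ennreal (\<bar>s - t\<bar> * M * J)"
    if s: "s \<in> {0..T}" for s
  proof -
    have "W1 (distr \<theta> borel (h s)) (distr \<theta> borel (h t)) \<le> (\<integral>\<^sup>+ x. ennreal (dist (h s x) (h t x)) \<partial>\<theta>)"
      by (rule W1_distr_le[OF P1D(2)[OF \<theta>] meas[OF s] meas[OF t]])
    also have "\<dots> \<le> (\<integral>\<^sup>+ x. ennreal ((\<bar>s - t\<bar> * M) * (1 + norm x)) \<partial>\<theta>)"
      using time[OF s t] by (intro nn_integral_mono ennreal_leI) (simp add: algebra_simps)
    also have "\<dots> = ennreal (integral\<^sup>L \<theta> (\<lambda>x. (\<bar>s - t\<bar> * M) * (1 + norm x)))"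
      by (rule nn_integral_eq_integral[OF P1_integrable_affine_norm[OF \<theta>]]) (use M in auto)
    finally show ?thesis unfolding J_def by simp
  qed
  have "((\<lambda>s. ennreal (\<bar>s - t\<bar> * M * J)) \<longlongrightarrow> ennreal (\<bar>t - t\<bar> * M * J)) (at t within {0..T})"
    by (intro tendsto_ennrealI tendsto_intros)
  then have lim: "((\<lambda>s. ennreal (\<bar>s - t\<bar> * M * J)) \<longlongrightarrow> 0) (at t within {0..T})" by simp
  show "((\<lambda>s. W1 (distr \<theta> borel (h s)) (distr \<theta> borel (h t))) \<longlongrightarrow> 0) (at t within {0..T})"
    by (rule tendsto_sandwich[OF _ _ tendsto_const lim])
      (auto simp: eventually_at_filter intro!: always_eventually bound)
qed

lemma SUP_dist_le_lipschitz:
  fixes g h :: "'i \<Rightarrow> 'a::metric_space \<Rightarrow> 'b::metric_space"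
  assumes A: "A \<noteq> {}" and bdd: "bdd_above ((\<lambda>i. dist (g i y) (h i y)) ` A)"
    and g: "\<And>i. i \<in> A \<Longrightarrow> dist (g i x) (g i y) \<le> E * dist x y"
    and h: "\<And>i. i \<in> A \<Longrightarrow> dist (h i x) (h i y) \<le> E * dist x y"
  shows "(SUP i\<in>A. dist (g i x) (h i x)) \<le> (SUP i\<in>A. dist (g i y) (h i y)) + 2 * E * dist x y"
proof (rule cSUP_least[OF A])
  fix i assume i: "i \<in> A"
  have "dist (g i x) (h i x) \<le> dist (g i x) (g i y) + dist (g i y) (h i y) + dist (h i y) (h i x)"
    by (metis dist_triangle add_right_mono order_trans)
  also have "\<dots> \<le> E * dist x y + (SUP i\<in>A. dist (g i y) (h i y)) + E * dist x y"
    using g[OF i] h[OF i] cSUP_upper[OF i bdd] by (intro add_mono) (auto simp: dist_commute)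
  finally show "dist (g i x) (h i x) \<le> (SUP i\<in>A. dist (g i y) (h i y)) + 2 * E * dist x y"
    by simp
qed

text \<open>Dominated convergence is applied to \<open>sup\<^sub>t |g j t x - h t x|\<close>, which bounds all
  the distances \<open>W\<^sub>1\<close> at once.\<close>

lemma W1_distr_uniform_tendsto_zero:
  fixes \<theta> :: "'a::euclidean_space measure" and T :: real
    and g :: "nat \<Rightarrow> real \<Rightarrow> 'a \<Rightarrow> 'a" and h :: "real \<Rightarrow> 'a \<Rightarrow> 'a"
  assumes \<theta>: "\<theta> \<in> P1" and T: "T \<ge> 0" and E: "E \<ge> 0"
    and g_lip: "\<And>j t x y. t \<in> {0..T} \<Longrightarrow> dist (g j t x) (g j t y) \<le> E * dist x y"
    and h_lip: "\<And>t x y. t \<in> {0..T} \<Longrightarrow> dist (h t x) (h t y) \<le> E * dist x y"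
    and g_growth: "\<And>j t x. t \<in> {0..T} \<Longrightarrow> norm (g j t x) \<le> E * (1 + norm x)"
    and h_growth: "\<And>t x. t \<in> {0..T} \<Longrightarrow> norm (h t x) \<le> E * (1 + norm x)"
    and unif: "\<And>x. uniform_limit {0..T} (\<lambda>j t. g j t x) (\<lambda>t. h t x) sequentially"
  shows "(\<lambda>j. \<Squnion>t\<in>{0..T}. W1 (distr \<theta> borel (g j t)) (distr \<theta> borel (h t))) \<longlonglongrightarrow> 0"
proof -
  define S where "S j x = (SUP t\<in>{0..T}. dist (g j t x) (h t x))" for j x
  have ne: "{0..T} \<noteq> {}" using T by auto
  have dist_le: "dist (g j t x) (h t x) \<le> 2 * E * (1 + norm x)" if "t \<in> {0..T}" for j t x
  proof -
    have "norm (g j t x) \<le> E * (1 + norm x)" "norm (h t x) \<le> E * (1 + norm x)"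
      using g_growth h_growth that by auto
    then show ?thesis using norm_triangle_ineq4[of "g j t x" "h t x"] by (simp add: dist_norm)
  qed
  then have bdd: "bdd_above ((\<lambda>t. dist (g j t x) (h t x)) ` {0..T})" for j x
    by (intro bdd_aboveI2)
  have le_S: "dist (g j t x) (h t x) \<le> S j x" if "t \<in> {0..T}" for j t x
    unfolding S_def by (rule cSUP_upper[OF that bdd])
  have S_nonneg: "0 \<le> S j x" for j x
    using le_S[of 0 j x] T by (meson atLeastAtMost_iff order_refl zero_le_dist order_trans)
  have S_bound: "S j x \<le> 2 * E * (1 + norm x)" for j x
    unfolding S_def by (rule cSUP_least[OF ne dist_le])
  have "S j x \<le> S j y + 2 * E * dist x y" for j x y
    unfolding S_def using ne bdd g_lip h_lip
    by (intro SUP_dist_le_lipschitz[where g = "g j" and h = h]) auto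
  then have "dist (S j x) (S j y) \<le> (2 * E) * dist x y" for j x y
    using dist_commute[of x y] by (smt (verit) dist_real_def)
  then have S_meas: "S j \<in> borel_measurable \<theta>" for j
    using lipschitz_borel_measurable[of "S j"] E by (simp add: measurable_cong_sets[OF P1D(2)[OF \<theta>] refl])
  have S_lim: "(\<lambda>j. S j x) \<longlonglongrightarrow> 0" for x
  proof (rule order_tendstoI)
    fix r :: real assume "0 < r"
    then have "\<forall>\<^sub>F j in sequentially. \<forall>t\<in>{0..T}. dist (g j t x) (h t x) < r / 2"
      by (intro uniform_limitD[OF unif]) simp
    then show "\<forall>\<^sub>F j in sequentially. S j x < r"
    proof eventually_elim
      case (elim j)
      have "S j x \<le> r / 2"
        unfolding S_def by (rule cSUP_least[OF ne]) (use elim in \<open>auto intro: less_imp_le\<close>)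
      then show ?case using \<open>0 < r\<close> by simp
    qed
  qed (use S_nonneg in \<open>auto intro: always_eventually less_le_trans\<close>)
  have "(\<lambda>j. \<integral>\<^sup>+ x. ennreal (norm (0 - S j x)) \<partial>\<theta>) \<longlonglongrightarrow> 0"
  proof (rule nn_integral_dominated_convergence_norm[where w = "\<lambda>x. 2 * E * (1 + norm x)"])
    have "(\<integral>\<^sup>+ x. ennreal (2 * E * (1 + norm x)) \<partial>\<theta>) = ennreal (integral\<^sup>L \<theta> (\<lambda>x. 2 * E * (1 + norm x)))"
      by (rule nn_integral_eq_integral[OF P1_integrable_affine_norm[OF \<theta>]]) (use E in auto)
    then show "(\<integral>\<^sup>+ x. ennreal (2 * E * (1 + norm x)) \<partial>\<theta>) < \<infinity>" by simp
  qed (use S_meas S_bound S_nonneg S_lim P1_integrable_affine_norm[OF \<theta>, of "2 * E"] in auto)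
  then have int_lim: "(\<lambda>j. \<integral>\<^sup>+ x. ennreal (S j x) \<partial>\<theta>) \<longlonglongrightarrow> 0"
    using S_nonneg by simp
  have "(\<Squnion>t\<in>{0..T}. W1 (distr \<theta> borel (g j t)) (distr \<theta> borel (h t))) \<le> (\<integral>\<^sup>+ x. ennreal (S j x) \<partial>\<theta>)" for j
  proof (rule SUP_least)
    fix t assume t: "t \<in> {0..T}"
    have "W1 (distr \<theta> borel (g j t)) (distr \<theta> borel (h t)) \<le> (\<integral>\<^sup>+ x. ennreal (dist (g j t x) (h t x)) \<partial>\<theta>)"
      using g_lip[OF t] h_lip[OF t] E
      by (intro W1_distr_le[OF P1D(2)[OF \<theta>]] lipschitz_borel_measurable)
    also have "\<dots> \<le> (\<integral>\<^sup>+ x. ennreal (S j x) \<partial>\<theta>)"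
      by (intro nn_integral_mono ennreal_leI le_S t)
    finally show "W1 (distr \<theta> borel (g j t)) (distr \<theta> borel (h t)) \<le> (\<integral>\<^sup>+ x. ennreal (S j x) \<partial>\<theta>)" .
  qed
  then show ?thesis
    by (intro tendsto_sandwich[OF _ _ tendsto_const int_lim]) auto
qed

section \<open>Sampling polygons\<close>

lemma is_partition_mono:
  assumes p: "is_partition T K p" and ij: "i \<le> j" and jK: "j \<le> K"
  shows "p i \<le> p j"
  using ij jK
proof (induction j rule: dec_induct)
  case (step j)
  then have "p j < p (Suc j)" using p unfolding is_partition_def by auto
  with step show ?case by simp
qed simp

lemma is_partition_less:
  assumes p: "is_partition T K p" and ij: "i < j" and jK: "j \<le> K"
  shows "p i < p j"
proof -
  have "p i < p (Suc i)" using p ij jK unfolding is_partition_def by auto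
  also have "\<dots> \<le> p j" using is_partition_mono[OF p, of "Suc i" j] ij jK by auto
  finally show ?thesis .
qed

lemma is_partition_range:
  assumes p: "is_partition T K p" and iK: "i \<le> K"
  shows "p i \<in> {0..T}"
  using is_partition_mono[OF p, of 0 i] is_partition_mono[OF p, of i K] iK p
  unfolding is_partition_def by auto

lemma partition_index_bounds:
  assumes p: "is_partition T K p" and t: "t \<in> {0..T}"
  defines "k \<equiv> GREATEST k. k < K \<and> p k \<le> t"
  shows "k < K" "p k \<le> t" "t \<le> p (Suc k)"
proof -
  let ?P = "\<lambda>k. k < K \<and> p k \<le> t"
  have "?P 0" using p t unfolding is_partition_def by auto
  then have Pk: "?P k" unfolding k_def by (rule GreatestI_nat[where b = K]) auto
  then show "k < K" "p k \<le> t" by auto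
  show "t \<le> p (Suc k)"
  proof (cases "Suc k < K")
    case True
    have "\<not> ?P (Suc k)"
      using Greatest_le_nat[of ?P "Suc k" K] unfolding k_def by auto
    then show ?thesis using True by auto
  next
    case False
    then have "Suc k = K" using Pk by auto
    then show ?thesis using p t unfolding is_partition_def by auto
  qed
qed

lemma partition_index_eq:
  assumes p: "is_partition T K p" and k: "k < K" "p k \<le> t"
    and upper: "Suc k < K \<Longrightarrow> t < p (Suc k)"
  shows "(GREATEST k. k < K \<and> p k \<le> t) = k"
proof (rule Greatest_equality)
  fix i assume i: "i < K \<and> p i \<le> t"
  show "i \<le> k"
  proof (rule ccontr)
    assume "\<not> i \<le> k"
    then have "p (Suc k) \<le> p i" "Suc k < K" using is_partition_mono[OF p, of "Suc k" i] i by auto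
    then show False using upper i by auto
  qed
qed (use k in auto)

lemma lipschitz_from_partition_pieces:
  fixes f :: "real \<Rightarrow> 'a::metric_space"
  assumes p: "is_partition T K p"
    and piece: "\<And>k s t. k < K \<Longrightarrow> s \<in> {p k..p (Suc k)} \<Longrightarrow> t \<in> {p k..p (Suc k)} \<Longrightarrow>
      dist (f t) (f s) \<le> \<Lambda> * \<bar>t - s\<bar>"
    and s: "s \<in> {0..T}" and t: "t \<in> {0..T}"
  shows "dist (f t) (f s) \<le> \<Lambda> * \<bar>t - s\<bar>"
proof -
  have p0: "p 0 = 0" and pK: "p K = T" using p unfolding is_partition_def by auto
  have "\<forall>s t. s \<in> {0..p m} \<longrightarrow> t \<in> {0..p m} \<longrightarrow> s \<le> t \<longrightarrow> dist (f t) (f s) \<le> \<Lambda> * (t - s)"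
    if "m \<le> K" for m
    using that
  proof (induction m)
    case 0 then show ?case using p0 by auto
  next
    case (Suc m)
    have mK: "m < K" using Suc by auto
    have pm: "0 \<le> p m" "p m \<le> p (Suc m)"
      using is_partition_range[OF p, of m] is_partition_mono[OF p, of m "Suc m"] mK by auto
    show ?case
    proof (intro allI impI)
      fix s t assume s: "s \<in> {0..p (Suc m)}" and t: "t \<in> {0..p (Suc m)}" and st: "s \<le> t"
      consider "t \<le> p m" | "p m \<le> s" | "s < p m" "p m < t" by linarith
      then show "dist (f t) (f s) \<le> \<Lambda> * (t - s)"
      proof cases
        case 3
        have "dist (f t) (f s) \<le> dist (f t) (f (p m)) + dist (f (p m)) (f s)" by (rule dist_triangle)
        also have "dist (f t) (f (p m)) \<le> \<Lambda> * (t - p m)"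
          using piece[OF mK, of "p m" t] t 3 pm by auto
        also have "dist (f (p m)) (f s) \<le> \<Lambda> * (p m - s)"
          using Suc.IH mK s 3 pm by auto
        finally show ?thesis by (simp add: algebra_simps)
      qed (use Suc.IH mK s t st piece[OF mK, of s t] in auto)
    qed
  qed
  from this[of K] s t pK show ?thesis
    by (cases "s \<le> t") (auto simp: dist_commute abs_minus_commute)
qed

lemma uniform_partition:
  assumes "T > 0"
  shows "is_partition T (Suc j) (\<lambda>k. T * real k / real (Suc j))"
    and "diam (Suc j) (\<lambda>k. T * real k / real (Suc j)) = T / real (Suc j)"
proof -
  have "T * real k / real (Suc j) < T * real (Suc k) / real (Suc j)" for k
    using assms by (intro divide_strict_right_mono) auto
  then show "is_partition T (Suc j) (\<lambda>k. T * real k / real (Suc j))"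
    unfolding is_partition_def by auto
  have "T * real (Suc k) / real (Suc j) - T * real k / real (Suc j) = T / real (Suc j)" for k
    by (simp add: diff_divide_distrib[symmetric] algebra_simps)
  then have "{T * real (Suc k) / real (Suc j) - T * real k / real (Suc j) |k. k < Suc j} = {T / real (Suc j)}"
    by auto
  then show "diam (Suc j) (\<lambda>k. T * real k / real (Suc j)) = T / real (Suc j)"
    unfolding diam_def by simp
qed

context controlled_field
begin

lemma flow_borel_measurable:
  assumes "admissible w a b" and "s \<in> {a..b}"
  shows "flow F w a s \<in> borel_measurable borel"
  using flow_dist[OF assms] by (intro lipschitz_borel_measurable) auto

end

locale sampling_scheme = controlled_field F U C
  for F :: "'a::euclidean_space \<Rightarrow> 'b::euclidean_space \<Rightarrow> 'a" and U C +
  fixes T :: real and G :: "real \<Rightarrow> 'a measure \<Rightarrow> real \<Rightarrow> 'b" and \<theta> :: "'a measure"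
  assumes T_pos: "T > 0"
    and G_ctrl: "\<And>t \<mu>. t \<in> {0..T} \<Longrightarrow> \<mu> \<in> space (prob_algebra borel) \<Longrightarrow> G t \<mu> \<in> ctrl_space T U"
    and theta: "\<theta> \<in> P1"
begin

definition sample_ctrl :: "(nat \<Rightarrow> real) \<Rightarrow> nat \<Rightarrow> real \<Rightarrow> 'b" where
  "sample_ctrl p k = G (p k) (node F G \<theta> p k)"

text \<open>\<open>node_map p k\<close> pushes \<open>\<theta>\<close> forward to the \<open>k\<close>-th node of the sampling polygon and
  \<open>polygon_map K p t\<close> to its value at time \<open>t\<close>.\<close>

primrec node_map :: "(nat \<Rightarrow> real) \<Rightarrow> nat \<Rightarrow> 'a \<Rightarrow> 'a" where
  "node_map p 0 = id"
| "node_map p (Suc k) = flow F (sample_ctrl p k) (p k) (p (Suc k)) \<circ> node_map p k"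

definition polygon_map :: "nat \<Rightarrow> (nat \<Rightarrow> real) \<Rightarrow> real \<Rightarrow> 'a \<Rightarrow> 'a" where
  "polygon_map K p t = (let k = (GREATEST k. k < K \<and> p k \<le> t) in
     flow F (sample_ctrl p k) (p k) t \<circ> node_map p k)"

lemma admissible_ctrl_space: "w \<in> ctrl_space T U \<Longrightarrow> 0 \<le> a \<Longrightarrow> b \<le> T \<Longrightarrow> admissible w a b"
  unfolding ctrl_space_def admissible_def by (auto intro: measurable_restrict_mono)

lemma sample_ctrl_admissible_if_measurable:
  assumes p: "is_partition T K p" and k: "k < K"
    and node: "node F G \<theta> p k = distr \<theta> borel (node_map p k)"
    and meas: "node_map p k \<in> borel_measurable borel"
  shows "admissible (sample_ctrl p k) (p k) (p (Suc k))"
  unfolding sample_ctrl_def node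
  using is_partition_range[OF p, of k] is_partition_range[OF p, of "Suc k"] k
  by (intro admissible_ctrl_space G_ctrl distr_in_prob_algebra[OF theta meas]) auto

lemma node_eq_distr_node_map:
  assumes p: "is_partition T K p"
  shows "k \<le> K \<Longrightarrow> node F G \<theta> p k = distr \<theta> borel (node_map p k) \<and>
    node_map p k \<in> borel_measurable borel"
proof (induction k)
  case 0
  show ?case using P1D(2)[OF theta] by (simp add: distr_id2)
next
  case (Suc k)
  then have k: "k < K" and IH: "node F G \<theta> p k = distr \<theta> borel (node_map p k)"
    "node_map p k \<in> borel_measurable borel" by auto
  let ?fl = "flow F (sample_ctrl p k) (p k) (p (Suc k))"
  have w: "admissible (sample_ctrl p k) (p k) (p (Suc k))"
    by (rule sample_ctrl_admissible_if_measurable[OF p k IH])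
  have fl: "?fl \<in> borel_measurable borel"
    using is_partition_mono[OF p, of k "Suc k"] k by (intro flow_borel_measurable[OF w]) auto
  have "node F G \<theta> p (Suc k) = distr (distr \<theta> borel (node_map p k)) borel ?fl"
    by (simp add: mu_sol_def IH(1)[symmetric] sample_ctrl_def)
  also have "\<dots> = distr \<theta> borel (node_map p (Suc k))"
    using IH(2) by (simp add: distr_distr[OF fl] measurable_cong_sets[OF P1D(2)[OF theta] refl])
  finally show ?case using measurable_comp[OF IH(2) fl] by (simp only: node_map.simps)
qed

lemma sample_ctrl_admissible:
  assumes p: "is_partition T K p" and k: "k < K"
  shows "admissible (sample_ctrl p k) (p k) (p (Suc k))"
  using node_eq_distr_node_map[OF p, of k] k by (intro sample_ctrl_admissible_if_measurable[OF p k]) auto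

lemma node_map_estimates:
  assumes p: "is_partition T K p"
  shows "k \<le> K \<Longrightarrow> dist (node_map p k x) (node_map p k y) \<le> exp (C * p k) * dist x y \<and>
    1 + norm (node_map p k x) \<le> (1 + norm x) * exp (C * p k)"
proof (induction k)
  case 0
  show ?case using p by (simp add: is_partition_def)
next
  case (Suc k)
  then have k: "k < K" by simp
  note w = sample_ctrl_admissible[OF p k]
  have s: "p (Suc k) \<in> {p k..p (Suc k)}" using is_partition_mono[OF p, of k "Suc k"] k by auto
  have e: "exp (C * (p (Suc k) - p k)) * exp (C * p k) = exp (C * p (Suc k))"
    by (simp add: exp_add[symmetric] algebra_simps)
  have "dist (node_map p (Suc k) x) (node_map p (Suc k) y)
      \<le> exp (C * (p (Suc k) - p k)) * dist (node_map p k x) (node_map p k y)"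
    using flow_dist[OF w s] by simp
  also have "\<dots> \<le> exp (C * (p (Suc k) - p k)) * (exp (C * p k) * dist x y)"
    using Suc k by (intro mult_left_mono) auto
  finally have "dist (node_map p (Suc k) x) (node_map p (Suc k) y) \<le> exp (C * p (Suc k)) * dist x y"
    using e by (simp add: mult.assoc[symmetric])
  moreover have "1 + norm (node_map p (Suc k) x) \<le> (1 + norm (node_map p k x)) * exp (C * (p (Suc k) - p k))"
    using flow_growth[OF w s] by simp
  moreover have "\<dots> \<le> ((1 + norm x) * exp (C * p k)) * exp (C * (p (Suc k) - p k))"
    using Suc k by (intro mult_right_mono) auto
  ultimately show ?case using e by (simp add: algebra_simps)
qed

lemma polygon_map_on_interval:
  assumes p: "is_partition T K p" and k: "k < K" and t: "t \<in> {p k..p (Suc k)}"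
  shows "polygon_map K p t = flow F (sample_ctrl p k) (p k) t \<circ> node_map p k"
proof (cases "t < p (Suc k) \<or> Suc k = K")
  case True
  then have "(GREATEST k. k < K \<and> p k \<le> t) = k"
    using t by (intro partition_index_eq[OF p k]) auto
  then show ?thesis unfolding polygon_map_def Let_def by simp
next
  case False
  then have t1: "t = p (Suc k)" and k1: "Suc k < K" using t k by auto
  have "(GREATEST k. k < K \<and> p k \<le> t) = Suc k"
    using t1 is_partition_less[OF p, of "Suc k" "Suc (Suc k)"] k1 by (intro partition_index_eq[OF p k1]) auto
  moreover have "flow F (sample_ctrl p (Suc k)) (p (Suc k)) (p (Suc k)) = id"
    using sample_ctrl_admissible[OF p k1] is_partition_mono[OF p, of "Suc k" "Suc (Suc k)"] k1
    by (auto intro!: flow_start)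
  ultimately show ?thesis unfolding polygon_map_def Let_def using t1 by simp
qed

text \<open>The estimates below are uniform in the partition: this is what makes the polygons compact.\<close>

lemma polygon_map_estimates:
  assumes p: "is_partition T K p" and t: "t \<in> {0..T}"
  shows "dist (polygon_map K p t x) (polygon_map K p t y) \<le> exp (C * T) * dist x y"
    and "norm (polygon_map K p t x) \<le> exp (C * T) * (1 + norm x)"
proof -
  define k where "k = (GREATEST k. k < K \<and> p k \<le> t)"
  have k: "k < K" "t \<in> {p k..p (Suc k)}" using partition_index_bounds[OF p t] unfolding k_def by auto
  note w = sample_ctrl_admissible[OF p k(1)]
  have N: "dist (node_map p k x) (node_map p k y) \<le> exp (C * p k) * dist x y"
    "1 + norm (node_map p k x) \<le> (1 + norm x) * exp (C * p k)"
    using node_map_estimates[OF p, of k] k by auto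
  have e: "exp (C * (t - p k)) * exp (C * p k) = exp (C * t)"
    by (simp add: exp_add[symmetric] algebra_simps)
  have eT: "exp (C * t) \<le> exp (C * T)" using t C_pos by auto
  have "dist (polygon_map K p t x) (polygon_map K p t y) \<le> exp (C * (t - p k)) * (exp (C * p k) * dist x y)"
    unfolding polygon_map_on_interval[OF p k] o_def
    by (rule order_trans[OF flow_dist[OF w k(2)] mult_left_mono[OF N(1)]]) simp
  also have "\<dots> \<le> exp (C * T) * dist x y"
    using e eT by (simp add: mult.assoc[symmetric] mult_right_mono)
  finally show "dist (polygon_map K p t x) (polygon_map K p t y) \<le> exp (C * T) * dist x y" .
  have "1 + norm (polygon_map K p t x) \<le> ((1 + norm x) * exp (C * p k)) * exp (C * (t - p k))"
    unfolding polygon_map_on_interval[OF p k] o_def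
    by (rule order_trans[OF flow_growth[OF w k(2)] mult_right_mono[OF N(2)]]) simp
  also have "\<dots> = (1 + norm x) * (exp (C * (t - p k)) * exp (C * p k))"
    by (simp only: mult_ac)
  also have "\<dots> \<le> (1 + norm x) * exp (C * T)"
    unfolding e by (rule mult_left_mono[OF eT]) simp
  finally show "norm (polygon_map K p t x) \<le> exp (C * T) * (1 + norm x)"
    by (simp add: algebra_simps)
qed

lemma polygon_map_time_lipschitz:
  assumes p: "is_partition T K p" and t: "t \<in> {0..T}" and s: "s \<in> {0..T}"
  shows "dist (polygon_map K p t x) (polygon_map K p s x) \<le> C * exp (C * T) * (1 + norm x) * \<bar>t - s\<bar>"
proof (rule lipschitz_from_partition_pieces[OF p _ s t])
  fix k s t assume k: "k < K" and s: "s \<in> {p k..p (Suc k)}" and t: "t \<in> {p k..p (Suc k)}"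
  note w = sample_ctrl_admissible[OF p k]
  have N: "1 + norm (node_map p k x) \<le> (1 + norm x) * exp (C * p k)"
    using node_map_estimates[OF p, of k] k by auto
  have e: "exp (C * p k) * exp (C * (p (Suc k) - p k)) = exp (C * p (Suc k))"
    by (simp add: exp_add[symmetric] algebra_simps)
  have eT: "exp (C * p (Suc k)) \<le> exp (C * T)" using is_partition_range[OF p, of "Suc k"] k C_pos by auto
  have "dist (polygon_map K p t x) (polygon_map K p s x)
      \<le> C * (1 + norm (node_map p k x)) * exp (C * (p (Suc k) - p k)) * \<bar>t - s\<bar>"
    unfolding polygon_map_on_interval[OF p k t] polygon_map_on_interval[OF p k s] o_def
    by (rule flow_time_lipschitz[OF w t s])
  also have "\<dots> \<le> C * ((1 + norm x) * exp (C * p k)) * exp (C * (p (Suc k) - p k)) * \<bar>t - s\<bar>"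
    using C_pos N by (intro mult_right_mono mult_left_mono) auto
  also have "\<dots> = C * (1 + norm x) * exp (C * p (Suc k)) * \<bar>t - s\<bar>"
    using e by (simp add: algebra_simps)
  also have "\<dots> \<le> C * (1 + norm x) * exp (C * T) * \<bar>t - s\<bar>"
    using eT C_pos by (intro mult_right_mono mult_left_mono) auto
  finally show "dist (polygon_map K p t x) (polygon_map K p s x) \<le> C * exp (C * T) * (1 + norm x) * \<bar>t - s\<bar>"
    by (simp add: algebra_simps)
qed

lemma polygon_eq_distr:
  assumes p: "is_partition T K p" and t: "t \<in> {0..T}"
  shows "polygon F G \<theta> K p t = distr \<theta> borel (polygon_map K p t)"
proof -
  define k where "k = (GREATEST k. k < K \<and> p k \<le> t)"
  have k: "k < K" "t \<in> {p k..p (Suc k)}" using partition_index_bounds[OF p t] unfolding k_def by auto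
  have N: "node F G \<theta> p k = distr \<theta> borel (node_map p k)" "node_map p k \<in> borel_measurable borel"
    using node_eq_distr_node_map[OF p, of k] k by auto
  have fl: "flow F (sample_ctrl p k) (p k) t \<in> borel_measurable borel"
    by (rule flow_borel_measurable[OF sample_ctrl_admissible[OF p k(1)] k(2)])
  have "polygon F G \<theta> K p t = distr (distr \<theta> borel (node_map p k)) borel (flow F (sample_ctrl p k) (p k) t)"
    unfolding polygon_def Let_def k_def[symmetric] N(1)[symmetric] sample_ctrl_def mu_sol_def ..
  also have "\<dots> = distr \<theta> borel (polygon_map K p t)"
    using N(2) unfolding polygon_map_def Let_def k_def[symmetric]
    by (simp add: distr_distr[OF fl] measurable_cong_sets[OF P1D(2)[OF theta] refl])
  finally show ?thesis .
qed

end

context sampling_scheme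
begin

lemma limit_of_polygon_maps_in_sampling_solutions:
  assumes part: "\<And>j. is_partition T (K j) (p j)" and diam: "(\<lambda>j. diam (K j) (p j)) \<longlonglongrightarrow> 0"
    and h_lip: "\<And>t x y. t \<in> {0..T} \<Longrightarrow> dist (h t x) (h t y) \<le> exp (C * T) * dist x y"
    and h_growth: "\<And>t x. t \<in> {0..T} \<Longrightarrow> norm (h t x) \<le> exp (C * T) * (1 + norm x)"
    and h_time: "\<And>t s x. t \<in> {0..T} \<Longrightarrow> s \<in> {0..T} \<Longrightarrow>
      dist (h t x) (h s x) \<le> C * exp (C * T) * (1 + norm x) * \<bar>t - s\<bar>"
    and unif: "\<And>x. uniform_limit {0..T} (\<lambda>j t. polygon_map (K j) (p j) t x) (\<lambda>t. h t x) sequentially"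
  shows "(\<lambda>t. distr \<theta> borel (h t)) \<in> sampling_solutions F G \<theta> T"
proof -
  have E: "exp (C * T) \<ge> 0" "C * exp (C * T) \<ge> 0" using C_pos by auto
  have "(\<lambda>t. distr \<theta> borel (h t)) \<in> CP1 T"
    using h_lip by (intro distr_curve_in_CP1[OF theta _ h_growth h_time] E(2)
        lipschitz_borel_measurable[where L = "exp (C * T)"]) auto
  moreover have "(\<lambda>j. \<Squnion>t\<in>{0..T}. W1 (polygon F G \<theta> (K j) (p j) t) (distr \<theta> borel (h t))) \<longlonglongrightarrow> 0"
  proof -
    have "(\<Squnion>t\<in>{0..T}. W1 (polygon F G \<theta> (K j) (p j) t) (distr \<theta> borel (h t)))
        = (\<Squnion>t\<in>{0..T}. W1 (distr \<theta> borel (polygon_map (K j) (p j) t)) (distr \<theta> borel (h t)))" for j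
      by (intro SUP_cong refl) (simp add: polygon_eq_distr[OF part])
    moreover have "(\<lambda>j. \<Squnion>t\<in>{0..T}. W1 (distr \<theta> borel (polygon_map (K j) (p j) t)) (distr \<theta> borel (h t)))
        \<longlonglongrightarrow> 0"
      using T_pos polygon_map_estimates[OF part] h_lip h_growth unif
      by (intro W1_distr_uniform_tendsto_zero[OF theta _ E(1), where g = "\<lambda>j. polygon_map (K j) (p j)"])
        auto
    ultimately show ?thesis by simp
  qed
  ultimately show ?thesis
    unfolding sampling_solutions_def mem_Collect_eq
    by (intro conjI exI[of _ K] exI[of _ p] allI part diam)
qed

theorem sampling_solutions_nonempty: "sampling_solutions F G \<theta> T \<noteq> {}"
proof -
  define P where "P j k = T * real k / real (Suc j)" for j k :: nat
  have part: "is_partition T (Suc j) (P j)" for j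
    unfolding P_def by (rule uniform_partition(1)[OF T_pos])
  have diam_lim: "(\<lambda>j. diam (Suc j) (P j)) \<longlonglongrightarrow> 0"
    unfolding P_def uniform_partition(2)[OF T_pos] using LIMSEQ_Suc[OF lim_const_over_n[of T]] by simp
  define E where "E = exp (C * T)"
  have E: "E \<ge> 0" "C * E \<ge> 0" unfolding E_def using C_pos by auto
  define g where "g j = polygon_map (Suc j) (P j)" for j
  have g_lip: "\<And>j t x y. t \<in> {0..T} \<Longrightarrow> dist (g j t x) (g j t y) \<le> E * dist x y"
    unfolding g_def E_def by (rule polygon_map_estimates(1)[OF part])
  have g_growth: "\<And>j t x. t \<in> {0..T} \<Longrightarrow> norm (g j t x) \<le> E * (1 + norm x)"
    unfolding g_def E_def by (rule polygon_map_estimates(2)[OF part])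
  have g_time: "\<And>j t s x. t \<in> {0..T} \<Longrightarrow> s \<in> {0..T} \<Longrightarrow>
      dist (g j t x) (g j s x) \<le> (C * E) * (1 + norm x) * \<bar>t - s\<bar>"
    unfolding g_def E_def by (rule polygon_map_time_lipschitz[OF part])
  have "\<exists>\<rho> h. strict_mono \<rho> \<and> (\<forall>t\<in>{0..T}. \<forall>x. (\<lambda>j. g (\<rho> j) t x) \<longlonglongrightarrow> h t x) \<and>
      (\<forall>x. uniform_limit {0..T} (\<lambda>j t. g (\<rho> j) t x) (\<lambda>t. h t x) sequentially)"
    by (rule equilipschitz_subseq_uniform_in_time[where L = E and M = "C * E" and E = E])
      (rule E g_lip g_growth g_time; assumption)+
  then obtain \<rho> h where \<rho>: "strict_mono \<rho>"
    and lim: "\<forall>t\<in>{0..T}. \<forall>x. (\<lambda>j. g (\<rho> j) t x) \<longlonglongrightarrow> h t x"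
    and unif: "\<forall>x. uniform_limit {0..T} (\<lambda>j t. g (\<rho> j) t x) (\<lambda>t. h t x) sequentially"
    by (elim exE conjE)
  note lim = lim[rule_format]
  have "dist (h t x) (h t y) \<le> E * dist x y" if t: "t \<in> {0..T}" for t x y
    by (rule LIMSEQ_le_const2[OF tendsto_dist[OF lim[OF t] lim[OF t]]]) (use g_lip[OF t] in auto)
  moreover have "norm (h t x) \<le> E * (1 + norm x)" if t: "t \<in> {0..T}" for t x
    by (rule LIMSEQ_le_const2[OF tendsto_norm[OF lim[OF t]]]) (use g_growth[OF t] in auto)
  moreover have "dist (h t x) (h s x) \<le> (C * E) * (1 + norm x) * \<bar>t - s\<bar>"
    if t: "t \<in> {0..T}" and s: "s \<in> {0..T}" for t s x
    by (rule LIMSEQ_le_const2[OF tendsto_dist[OF lim[OF t] lim[OF s]]]) (use g_time[OF t s] in auto)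
  ultimately have "(\<lambda>t. distr \<theta> borel (h t)) \<in> sampling_solutions F G \<theta> T"
    using part LIMSEQ_subseq_LIMSEQ[OF diam_lim \<rho>] unif unfolding g_def E_def comp_def
    by (intro limit_of_polygon_maps_in_sampling_solutions[where K = "\<lambda>j. Suc (\<rho> j)" and p = "\<lambda>j. P (\<rho> j)"])
      auto
  then show ?thesis by blast
qed

end

lemma ctrl_alg_measurable_in_ctrl_space:
  assumes uu: "(\<lambda>(t, \<mu>). uu t \<mu>) \<in> measurable (restrict_space borel {0..T} \<Otimes>\<^sub>M prob_algebra borel) (ctrl_alg T U)"
    and t: "t \<in> {0..T}" and \<mu>: "\<mu> \<in> space (prob_algebra borel)"
  shows "uu t \<mu> \<in> ctrl_space T U"
proof -
  have "(t, \<mu>) \<in> space (restrict_space borel {0..T} \<Otimes>\<^sub>M prob_algebra borel)"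
    using t \<mu> by (simp add: space_pair_measure)
  from measurable_space[OF uu this] show ?thesis
    unfolding ctrl_alg_def by (simp add: space_measure_of_conv)
qed

theorem proposition2:
  fixes f :: "'a::euclidean_space \<Rightarrow> 'a" and v :: "'a \<Rightarrow> 'b::euclidean_space \<Rightarrow> 'a"
    and U :: "'b set" and T :: real and C :: real and \<theta> :: "'a measure"
  assumes T: "T > 0"
    and U: "compact U"
    and H1_cont: "continuous_on (UNIV \<times> U) (\<lambda>(x, u). f x + v x u)"
    and C: "C > 0"
    and H1_growth: "\<forall>u\<in>U. \<forall>x. norm (f x + v x u) \<le> C * (1 + norm x)"
    and H1_lip: "\<forall>u\<in>U. \<forall>x y. norm ((f x + v x u) - (f y + v y u)) \<le> C * norm (x - y)"
    and theta: "\<theta> \<in> P1"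
  shows "(\<forall>u :: real \<Rightarrow> 'a measure \<Rightarrow> 'b.
            (\<forall>t\<in>{0..T}. \<forall>\<mu>\<in>space (prob_algebra borel). u t \<mu> \<in> U) \<longrightarrow>
            S1 (\<lambda>x w. f x + v x w) u \<theta> T \<noteq> {})
       \<and> (\<forall>uu :: real \<Rightarrow> 'a measure \<Rightarrow> (real \<Rightarrow> 'b).
            (\<lambda>(t, \<mu>). uu t \<mu>) \<in> measurable (restrict_space borel {0..T} \<Otimes>\<^sub>M prob_algebra borel) (ctrl_alg T U) \<longrightarrow>
            S2 (\<lambda>x w. f x + v x w) uu \<theta> T \<noteq> {})"
proof -
  have field: "controlled_field (\<lambda>x w. f x + v x w) U C"
    by unfold_locales (use H1_cont C H1_growth H1_lip in auto)
  have nonempty: "sampling_solutions (\<lambda>x w. f x + v x w) G \<theta> T \<noteq> {}"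
    if "\<And>t \<mu>. t \<in> {0..T} \<Longrightarrow> \<mu> \<in> space (prob_algebra borel) \<Longrightarrow> G t \<mu> \<in> ctrl_space T U" for G
  proof -
    interpret sampling_scheme "\<lambda>x w. f x + v x w" U C T G \<theta>
      by (intro sampling_scheme.intro[OF field] sampling_scheme_axioms.intro) (use that T theta in auto)
    show ?thesis by (rule sampling_solutions_nonempty)
  qed
  show ?thesis
  proof (intro conjI allI impI)
    fix u :: "real \<Rightarrow> 'a measure \<Rightarrow> 'b"
    assume "\<forall>t\<in>{0..T}. \<forall>\<mu>\<in>space (prob_algebra borel). u t \<mu> \<in> U"
    then show "S1 (\<lambda>x w. f x + v x w) u \<theta> T \<noteq> {}"
      unfolding S1_def by (intro nonempty) (auto simp: ctrl_space_def)
  next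
    fix uu :: "real \<Rightarrow> 'a measure \<Rightarrow> (real \<Rightarrow> 'b)"
    assume "(\<lambda>(t, \<mu>). uu t \<mu>) \<in> measurable (restrict_space borel {0..T} \<Otimes>\<^sub>M prob_algebra borel) (ctrl_alg T U)"
    then show "S2 (\<lambda>x w. f x + v x w) uu \<theta> T \<noteq> {}"
      unfolding S2_def by (intro nonempty ctrl_alg_measurable_in_ctrl_space)
  qed
qed

end
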